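(* Under the smash product $\diamond$ on $C^\bullet$, the subspace $Z^\bullet$ is a subalgebra and $B^\bullet$ is a two-sided ideal of $Z^\bullet$: if $\alpha,\beta\in Z^\bullet$ then $\alpha\diamond\beta\in Z^\bullet$, and if $\alpha\in Z^\bullet$, $\beta\in B^\bullet$ then $\alpha\diamond\beta\in B^\bullet$ and $\beta\diamond\alpha\in B^\bullet$. In particular $Z^\bullet/B^\bullet$ is an algebra subquotient of $S(V)\otimes\bigwedge^\bullet V^*\otimes\mathbb C[G]$ under $\diamond$.
   Context: Let $G$ be a finite group and $V$ a complex vector space of finite dimension $n$ on which $G$ acts linearly; fix a $G$-invariant Hermitian inner product on $V$. For $g\in G$ let $V^g$ be the fixed space of $g$ and $(V^g)^\perp$ its orthogonal complement. $G$ acts on $V^*$ by $({}^g\phi)(v)=\phi({}^{g^{-1}}v)$ and hence on $S(V)$, $\bigwedge V^*$. For a subspace $W\subseteq V$ regard $W^*$ as the functionals in $V^*$ vanishing on $W^\perp$. Let $C^p=S(V)\otimes\bigwedge^pV^*\otimes\mathbb C[G]=\bigoplus_{g\in G}S(V)\otimes\bigwedge^pV^*\otimes g$. Let $Z^p=\bigoplus_{g\in G}S(V)\otimes\big(\bigwedge^{p-\operatorname{codim}V^g}(V^g)^*\wedge\bigwedge^{\operatorname{codim}V^g}((V^g)^\perp)^*\big)\otimes g\subseteq C^p$ and $B^p=\bigoplus_{g\in G}I((V^g)^\perp)\otimes\big(\bigwedge^{p-\operatorname{codim}V^g}(V^g)^*\wedge\bigwedge^{\operatorname{codim}V^g}((V^g)^\perp)^*\big)\otimes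 g$, where $I((V^g)^\perp)$ is the ideal of $S(V)$ generated by $(V^g)^\perp\subseteq V$ and negative exterior powers are $0$. The smash product on $C^\bullet$ (the skew group algebra $(S(V)\otimes\bigwedge^\bullet V^* )\#G$ for the diagonal action) is $(f\otimes\omega\otimes g)\diamond(f'\otimes\omega'\otimes h)=f\,{}^gf'\otimes(\omega\wedge{}^g\omega')\otimes gh$. *)

theory Defs
  imports "HOL-Analysis.Analysis" "HOL-Algebra.Group"
begin

text \<open>V = complex^'n (n = CARD('n)); a group element g acts on V by the matrix rho g.
  V^* is also modelled as complex^'n via the bilinear pairing below.
  S(V) = polynomial functions on V^* (v in V is the linear function xi |-> xi(v)).
  An element of S(V) (x) wedge V^* is a function F(xi, vs), polynomial in xi, and whose
  restriction to lists vs of length p is the degree-p component (an alternating p-form).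
  An element of C = (S(V) (x) wedge V^*) (x) C[G] is a function alpha : 'g => ..., alpha g
  being the coefficient of g (zero outside the carrier).\<close>

definition pair :: "complex^'n \<Rightarrow> complex^'n \<Rightarrow> complex" where
  "pair xi v = (\<Sum>i\<in>UNIV. xi $ i * v $ i)"

inductive_set fspan :: "('x \<Rightarrow> complex) set \<Rightarrow> ('x \<Rightarrow> complex) set" for S where
  fspan_zero: "(\<lambda>x. 0) \<in> fspan S"
| fspan_step: "f \<in> S \<Longrightarrow> u \<in> fspan S \<Longrightarrow> (\<lambda>x. c * f x + u x) \<in> fspan S"

inductive_set polyfun :: "(complex^'n \<Rightarrow> complex) set" where
  polyfun_const: "(\<lambda>xi. c) \<in> polyfun"
| polyfun_lin: "(\<lambda>xi. pair xi v) \<in> polyfun"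
| polyfun_add: "f \<in> polyfun \<Longrightarrow> g \<in> polyfun \<Longrightarrow> (\<lambda>xi. f xi + g xi) \<in> polyfun"
| polyfun_mult: "f \<in> polyfun \<Longrightarrow> g \<in> polyfun \<Longrightarrow> (\<lambda>xi. f xi * g xi) \<in> polyfun"

inductive_set ideal_gen :: "(complex^'n) set \<Rightarrow> (complex^'n \<Rightarrow> complex) set" for W where
  ideal_gen_zero: "(\<lambda>xi. 0) \<in> ideal_gen W"
| ideal_gen_step: "w \<in> W \<Longrightarrow> f \<in> polyfun \<Longrightarrow> q \<in> ideal_gen W \<Longrightarrow>
      (\<lambda>xi. pair xi w * f xi + q xi) \<in> ideal_gen W"

text \<open>Sign of the shuffle putting the positions in S first (in order) and the rest after.\<close>
definition shuffle_sign :: "nat \<Rightarrow> nat set \<Rightarrow> complex" where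
  "shuffle_sign m S = (-1) ^ card {(i, j). i < j \<and> j < m \<and> j \<in> S \<and> i \<notin> S}"

definition owedge :: "('v list \<Rightarrow> complex) \<Rightarrow> ('v list \<Rightarrow> complex) \<Rightarrow> 'v list \<Rightarrow> complex" where
  "owedge w1 w2 vs = (\<Sum>S\<in>Pow {..<length vs}.
      shuffle_sign (length vs) S * w1 (nths vs S) * w2 (nths vs (- S)))"

definition twedge :: "((complex^'n) \<times> (complex^'n) list \<Rightarrow> complex) \<Rightarrow>
    ((complex^'n) \<times> (complex^'n) list \<Rightarrow> complex) \<Rightarrow> (complex^'n) \<times> (complex^'n) list \<Rightarrow> complex" where
  "twedge F1 F2 = (\<lambda>(xi, vs). owedge (\<lambda>ws. F1 (xi, ws)) (\<lambda>ws. F2 (xi, ws)) vs)"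

definition oneform :: "complex^'n \<Rightarrow> (complex^'n) list \<Rightarrow> complex" where
  "oneform xi vs = (if length vs = 1 then pair xi (hd vs) else 0)"

fun wedge_list :: "(complex^'n) list \<Rightarrow> (complex^'n) list \<Rightarrow> complex" where
  "wedge_list [] = (\<lambda>vs. if vs = [] then 1 else 0)"
| "wedge_list (xi # xis) = owedge (oneform xi) (wedge_list xis)"

definition extpow :: "(complex^'n) set \<Rightarrow> nat \<Rightarrow> ((complex^'n) list \<Rightarrow> complex) set" where
  "extpow L k = fspan {wedge_list xis | xis. set xis \<subseteq> L \<and> length xis = k}"

definition hermitian_inner :: "(complex^'n \<Rightarrow> complex^'n \<Rightarrow> complex) \<Rightarrow> bool" where
  "hermitian_inner h \<longleftrightarrow>
     (\<forall>a b u v w. h (a *s u + b *s v) w = a * h u w + b * h v w) \<and>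
     (\<forall>v w. h v w = cnj (h w v)) \<and>
     (\<forall>v. v \<noteq> 0 \<longrightarrow> Im (h v v) = 0 \<and> Re (h v v) > 0)"

definition fixsp :: "(complex^'n^'n) \<Rightarrow> (complex^'n) set" where
  "fixsp A = {v. A *v v = v}"

definition perp :: "(complex^'n \<Rightarrow> complex^'n \<Rightarrow> complex) \<Rightarrow> (complex^'n) set \<Rightarrow> (complex^'n) set" where
  "perp h W = {u. \<forall>w\<in>W. h w u = 0}"

text \<open>W^* = functionals in V^* vanishing on the orthogonal complement of W.\<close>
definition dualsub :: "(complex^'n \<Rightarrow> complex^'n \<Rightarrow> complex) \<Rightarrow> (complex^'n) set \<Rightarrow> (complex^'n) set" where
  "dualsub h W = {xi. \<forall>u\<in>perp h W. pair xi u = 0}"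

definition codim :: "(complex^'n) set \<Rightarrow> nat" where
  "codim W = CARD('n) - vec.dim W"

definition hcomp :: "nat \<Rightarrow> ((complex^'n) \<times> (complex^'n) list \<Rightarrow> complex) \<Rightarrow>
    (complex^'n) \<times> (complex^'n) list \<Rightarrow> complex" where
  "hcomp p F = (\<lambda>(xi, vs). if length vs = p then F (xi, vs) else 0)"

text \<open>The g-component of Z^p (with ring R = S(V)) resp. of B^p (with R = I((V^g)^perp)).\<close>
definition comp_space :: "(complex^'n \<Rightarrow> complex) set \<Rightarrow> (complex^'n \<Rightarrow> complex^'n \<Rightarrow> complex)
    \<Rightarrow> complex^'n^'n \<Rightarrow> nat \<Rightarrow> ((complex^'n) \<times> (complex^'n) list \<Rightarrow> complex) set" where
  "comp_space R h A p = fspan {(\<lambda>(xi, vs). f xi * owedge om eta vs) | f om eta.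
      codim (fixsp A) \<le> p \<and> f \<in> R \<and>
      om \<in> extpow (dualsub h (fixsp A)) (p - codim (fixsp A)) \<and>
      eta \<in> extpow (dualsub h (perp h (fixsp A))) (codim (fixsp A))}"

definition Zsp where
  "Zsp G rho h = {alpha. (\<forall>g. g \<notin> carrier G \<longrightarrow> alpha g = (\<lambda>_. 0)) \<and>
     (\<forall>g\<in>carrier G. \<forall>p. hcomp p (alpha g) \<in> comp_space polyfun h (rho g) p)}"

definition Bsp where
  "Bsp G rho h = {alpha. (\<forall>g. g \<notin> carrier G \<longrightarrow> alpha g = (\<lambda>_. 0)) \<and>
     (\<forall>g\<in>carrier G. \<forall>p. hcomp p (alpha g) \<in>
        comp_space (ideal_gen (perp h (fixsp (rho g)))) h (rho g) p)}"

definition act where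
  "act G rho g F = (\<lambda>(xi, vs). F (xi v* rho g, map (\<lambda>v. rho (inv\<^bsub>G\<^esub> g) *v v) vs))"

definition smash where
  "smash G rho alpha beta = (\<lambda>k. if k \<in> carrier G then
      (\<lambda>z. \<Sum>g\<in>carrier G. twedge (alpha g) (act G rho g (beta (inv\<^bsub>G\<^esub> g \<otimes>\<^bsub>G\<^esub> k))) z)
    else (\<lambda>_. 0))"

end

theory Submission
  imports Defs
begin

(* Write U_g for the fixed space of g, N_g for its orthogonal complement and c_g for the
   codimension of U_g.  The degree-p part of the g-component of Z is spanned by the products
   f (om ^ eta) with f in S(V), om in Lambda^(p - c_g) U_g^* and eta in Lambda^(c_g) N_g^*; by
   multilinearity one may take om and eta to be wedges of 1-forms.  Since
   (alpha <> beta)_k = sum_g alpha_g ^ g.beta_(g^-1 k), everything reduces to one key fact: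

   for unitary A, B, the product (om ^ eta_A) ^ A.(om' ^ eta_B) of two such generators is, up
   to sign, (om ^ A.om') ^ (eta_A ^ A.eta_B).  If the 1-forms making up eta_A and A.eta_B are
   dependent this vanishes.  Otherwise U_(AB) is U_A intersected with A(U_B), the codimensions
   add, eta_A ^ A.eta_B is a top form of N_(AB)^*, the remaining 1-forms may be projected into
   U_(AB)^*, and N_A and A(N_B) lie in N_(AB), so that the ideals I(N) are respected. *)

section \<open>The shuffle product of alternating forms\<close>

text \<open>Two auxiliary operations drive the recursion
  for the shuffle product: insertion of a vector as first argument (interior product) and the
  grading involution, which multiplies the degree-k part by (-1)^k.\<close>

definition contract :: "'v \<Rightarrow> ('v list \<Rightarrow> complex) \<Rightarrow> 'v list \<Rightarrow> complex" where
  "contract v w = (\<lambda>us. w (v # us))"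

definition grade_inv :: "('v list \<Rightarrow> complex) \<Rightarrow> 'v list \<Rightarrow> complex" where
  "grade_inv w = (\<lambda>us. (-1) ^ length us * w us)"

abbreviation form_unit :: "'v list \<Rightarrow> complex" where
  "form_unit \<equiv> \<lambda>vs. if vs = [] then 1 else 0"

definition invs :: "nat \<Rightarrow> nat set \<Rightarrow> (nat \<times> nat) set" where
  "invs m S = {(i, j). i < j \<and> j < m \<and> j \<in> S \<and> i \<notin> S}"

lemma shuffle_sign_invs: "shuffle_sign m S = (-1) ^ card (invs m S)"
  unfolding shuffle_sign_def invs_def by simp

lemma finite_invs: "finite (invs m S)"
  by (rule finite_subset[of _ "{..<m} \<times> {..<m}"]) (auto simp: invs_def)

text \<open>Shifting a shuffle by one position: if position 0 is selected no inversion is created,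
  otherwise position 0 forms an inversion with every selected position.\<close>
lemma invs_Suc_ins: "invs (Suc m) (insert 0 (Suc ` S)) = map_prod Suc Suc ` invs m S"
proof (intro Set.set_eqI iffI)
  fix x assume "x \<in> invs (Suc m) (insert 0 (Suc ` S))"
  then obtain i j where x: "x = (Suc i, Suc j)" "(i, j) \<in> invs m S"
    by (cases x) (auto simp: invs_def image_iff gr0_conv_Suc)
  then show "x \<in> map_prod Suc Suc ` invs m S" by force
qed (auto simp: invs_def)

lemma invs_Suc_noins: "S \<subseteq> {..<m} \<Longrightarrow>
  invs (Suc m) (Suc ` S) = Pair 0 ` (Suc ` S) \<union> map_prod Suc Suc ` invs m S"
proof (intro Set.set_eqI iffI)
  fix x assume S: "S \<subseteq> {..<m}" and "x \<in> invs (Suc m) (Suc ` S)"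
  then obtain i j where x: "x = (i, j)" "i < j" "j < Suc m" "j \<in> Suc ` S" "i \<notin> Suc ` S"
    by (cases x) (auto simp: invs_def)
  then show "x \<in> Pair 0 ` (Suc ` S) \<union> map_prod Suc Suc ` invs m S"
    by (cases i) (auto simp: invs_def image_iff)
qed (auto simp: invs_def)
lemma card_invs_ins: "card (invs (Suc m) (insert 0 (Suc ` S))) = card (invs m S)"
proof -
  have "inj_on (map_prod Suc Suc) (invs m S)" by (auto simp: inj_on_def)
  then show ?thesis by (simp add: invs_Suc_ins card_image)
qed

lemma card_invs_noins: assumes "S \<subseteq> {..<m}"
  shows "card (invs (Suc m) (Suc ` S)) = card S + card (invs m S)"
proof -
  have fS: "finite S" using assms finite_subset by blast
  have "card (Pair (0::nat) ` (Suc ` S) \<union> map_prod Suc Suc ` invs m S)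
      = card (Pair (0::nat) ` (Suc ` S)) + card (map_prod Suc Suc ` invs m S)"
    by (subst card_Un_disjoint) (auto simp: fS finite_invs)
  also have "\<dots> = card S + card (invs m S)"
  proof -
    have "inj_on (map_prod Suc Suc) (invs m S)" by (auto simp: inj_on_def)
    then have 1: "card (map_prod Suc Suc ` invs m S) = card (invs m S)" by (simp add: card_image)
    have "inj_on (\<lambda>j. (0::nat, Suc j)) S" by (auto simp: inj_on_def)
    then have "card ((\<lambda>j. (0::nat, Suc j)) ` S) = card S" by (simp add: card_image)
    moreover have "Pair 0 ` (Suc ` S) = (\<lambda>j. (0::nat, Suc j)) ` S" by auto
    ultimately show ?thesis using 1 by simp
  qed
  finally show ?thesis using invs_Suc_noins[OF assms] by simp
qed

lemma Pow_lessThan_Suc: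
  "Pow {..<Suc m} = (\<lambda>S. insert 0 (Suc ` S)) ` Pow {..<m} \<union> (\<lambda>S. Suc ` S) ` Pow {..<m}"
proof (intro Set.set_eqI iffI)
  fix T assume T: "T \<in> Pow {..<Suc m}"
  let ?S = "{j. Suc j \<in> T}"
  have S: "?S \<in> Pow {..<m}" using T by auto
  have "T = (if 0 \<in> T then insert 0 (Suc ` ?S) else Suc ` ?S)"
    by (auto simp: image_iff) (metis not0_implies_Suc)+
  then show "T \<in> (\<lambda>S. insert 0 (Suc ` S)) ` Pow {..<m} \<union> (\<lambda>S. Suc ` S) ` Pow {..<m}"
    using S by (metis (no_types, lifting) UnI1 UnI2 image_eqI)
qed auto

lemma nths_Cons_Suc: "nths (v # vs) (Suc ` S) = nths vs S"
  by (simp add: nths_Cons image_iff)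
lemma nths_Cons_ins: "nths (v # vs) (insert 0 (Suc ` S)) = v # nths vs S"
  by (simp add: nths_Cons image_iff)
lemma nths_Cons_compl_Suc: "nths (v # vs) (- (Suc ` S)) = v # nths vs (- S)"
proof -
  have "{j. Suc j \<in> - Suc ` S} = - S" by auto
  then show ?thesis by (simp add: nths_Cons image_iff)
qed
lemma nths_Cons_compl_ins: "nths (v # vs) (- insert 0 (Suc ` S)) = nths vs (- S)"
proof -
  have "{j. Suc j \<in> - insert 0 (Suc ` S)} = - S" by auto
  then show ?thesis by (simp add: nths_Cons image_iff)
qed

lemma length_nths_sub: "S \<subseteq> {..<length vs} \<Longrightarrow> length (nths vs S) = card S"
proof -
  assume "S \<subseteq> {..<length vs}"
  then have "{i. i < length vs \<and> i \<in> S} = S" by auto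
  then show ?thesis by (simp add: length_nths)
qed

text \<open>The Leibniz rule: contracting a product with v gives the contraction of the first factor
  times the second, plus the twisted first factor times the contraction of the second.  It is
  the recursion through which all algebraic laws of the shuffle product are proved.\<close>

lemma owedge_Nil: "owedge w1 w2 [] = w1 [] * w2 []"
  by (simp add: owedge_def shuffle_sign_def)

lemma owedge_Cons: "owedge w1 w2 (v # vs) = owedge (contract v w1) w2 vs + owedge (grade_inv w1) (contract v w2) vs"
proof -
  let ?m = "length vs"
  let ?F = "\<lambda>S. shuffle_sign (Suc ?m) S * w1 (nths (v # vs) S) * w2 (nths (v # vs) (- S))"
  have inj1: "inj_on (\<lambda>S. insert 0 (Suc ` S)) (Pow {..<?m})"
    by (rule inj_onI) (metis Zero_not_Suc image_iff inj_image_eq_iff inj_Suc insert_iff insert_ident)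
  have inj2: "inj_on (\<lambda>S. Suc ` S) (Pow {..<?m})"
    by (meson inj_Suc inj_image_eq_iff inj_onI)
  have disj: "(\<lambda>S. insert 0 (Suc ` S)) ` Pow {..<?m} \<inter> (\<lambda>S. Suc ` S) ` Pow {..<?m} = {}"
    by auto
  have "owedge w1 w2 (v # vs) = sum ?F (Pow {..<Suc ?m})"
    by (simp add: owedge_def)
  also have "\<dots> = sum ?F ((\<lambda>S. insert 0 (Suc ` S)) ` Pow {..<?m}) + sum ?F ((\<lambda>S. Suc ` S) ` Pow {..<?m})"
    unfolding Pow_lessThan_Suc by (rule sum.union_disjoint) (use disj in auto)
  also have "sum ?F ((\<lambda>S. insert 0 (Suc ` S)) ` Pow {..<?m}) = owedge (contract v w1) w2 vs"
    unfolding sum.reindex[OF inj1] owedge_def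
    by (rule sum.cong) (auto simp: shuffle_sign_invs card_invs_ins nths_Cons_ins nths_Cons_compl_ins contract_def)
  also have "sum ?F ((\<lambda>S. Suc ` S) ` Pow {..<?m}) = owedge (grade_inv w1) (contract v w2) vs"
    unfolding sum.reindex[OF inj2] owedge_def
  proof (rule sum.cong)
    fix S assume "S \<in> Pow {..<?m}"
    then have S: "S \<subseteq> {..<?m}" by auto
    show "(?F \<circ> (\<lambda>S. Suc ` S)) S = shuffle_sign (length vs) S * grade_inv w1 (nths vs S) * contract v w2 (nths vs (- S))"
      using S by (simp add: shuffle_sign_invs card_invs_noins nths_Cons_Suc nths_Cons_compl_Suc
            contract_def grade_inv_def length_nths_sub power_add)
  qed simp
  finally show ?thesis .
qed


lemma owedge_addL: "owedge (\<lambda>x. a x + b x) c vs = owedge a c vs + owedge b c vs"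
  by (simp add: owedge_def algebra_simps sum.distrib)
lemma owedge_addR: "owedge a (\<lambda>x. b x + c x) vs = owedge a b vs + owedge a c vs"
  by (simp add: owedge_def algebra_simps sum.distrib)
lemma owedge_scaleL: "owedge (\<lambda>x. k * a x) c vs = k * owedge a c vs"
  by (simp add: owedge_def algebra_simps sum_distrib_left)
lemma owedge_scaleR: "owedge a (\<lambda>x. k * c x) vs = k * owedge a c vs"
  by (simp add: owedge_def algebra_simps sum_distrib_left)
lemma owedge_negL: "owedge (\<lambda>x. - a x) c vs = - owedge a c vs"
  by (simp add: owedge_def algebra_simps sum_negf)
lemma owedge_negR: "owedge a (\<lambda>x. - c x) vs = - owedge a c vs"
  by (simp add: owedge_def algebra_simps sum_negf)
lemma owedge_zeroL: "owedge (\<lambda>x. 0) c vs = 0"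
  by (simp add: owedge_def)
lemma owedge_zeroR: "owedge a (\<lambda>x. 0) vs = 0"
  by (simp add: owedge_def)

lemma owedge_scaleL_fun: "owedge (\<lambda>x. k * a x) c = (\<lambda>vs. k * owedge a c vs)"
  by (rule ext) (rule owedge_scaleL)
lemma owedge_scaleR_fun: "owedge a (\<lambda>x. k * c x) = (\<lambda>vs. k * owedge a c vs)"
  by (rule ext) (rule owedge_scaleR)
lemma owedge_negL_fun: "owedge (\<lambda>x. - a x) c = (\<lambda>vs. - owedge a c vs)"
  by (rule ext) (rule owedge_negL)
lemma owedge_zeroL_fun: "owedge (\<lambda>x. 0) c = (\<lambda>vs. 0)"
  by (rule ext) (rule owedge_zeroL)
lemma owedge_zeroR_fun: "owedge a (\<lambda>x. 0) = (\<lambda>vs. 0)"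
  by (rule ext) (rule owedge_zeroR)
lemma owedge_addL_fun: "owedge (\<lambda>x. a x + b x) c = (\<lambda>vs. owedge a c vs + owedge b c vs)"
  by (rule ext) (rule owedge_addL)
lemma owedge_linL_fun: "owedge (\<lambda>z. c * a z + u z) b = (\<lambda>vs. c * owedge a b vs + owedge u b vs)"
  by (rule ext) (simp add: owedge_addL owedge_scaleL)
lemma owedge_linR_fun: "owedge b (\<lambda>z. c * a z + u z) = (\<lambda>vs. c * owedge b a vs + owedge b u vs)"
  by (rule ext) (simp add: owedge_addR owedge_scaleR)

text \<open>The grading involution is multiplicative and commutes with contraction up to sign; these
  two facts make the Leibniz rule compatible with iterated products.\<close>

lemma grade_inv_grade_inv: "grade_inv (grade_inv a) = a"
  by (rule ext) (simp add: grade_inv_def power_mult_distrib[symmetric])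

lemma contract_grade_inv: "contract v (grade_inv a) = (\<lambda>us. (-1) * grade_inv (contract v a) us)"
  by (rule ext) (simp add: grade_inv_def contract_def)

lemma contract_owedge:
  "contract v (owedge a b) = (\<lambda>us. owedge (contract v a) b us + owedge (grade_inv a) (contract v b) us)"
  by (rule ext) (simp add: contract_def owedge_Cons)

lemma grade_inv_owedge: "grade_inv (owedge a b) = owedge (grade_inv a) (grade_inv b)"
proof (rule ext)
  fix vs show "grade_inv (owedge a b) vs = owedge (grade_inv a) (grade_inv b) vs"
  proof (induction vs arbitrary: a b)
    case Nil
    then show ?case by (simp add: grade_inv_def owedge_Nil)
  next
    case (Cons v vs)
    have "grade_inv (owedge a b) (v # vs)
        = - (grade_inv (owedge (contract v a) b) vs + grade_inv (owedge (grade_inv a) (contract v b)) vs)"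
      by (simp add: grade_inv_def owedge_Cons algebra_simps)
    also have "\<dots> = - (owedge (grade_inv (contract v a)) (grade_inv b) vs
        + owedge (grade_inv (grade_inv a)) (grade_inv (contract v b)) vs)"
      using Cons by simp
    also have "\<dots> = owedge (grade_inv a) (grade_inv b) (v # vs)"
      by (simp add: owedge_Cons contract_grade_inv owedge_scaleL owedge_scaleR grade_inv_grade_inv
          owedge_negL owedge_negR)
    finally show ?case .
  qed
qed

lemma owedge_assoc: "owedge (owedge a b) c = owedge a (owedge b c)"
proof (rule ext)
  fix vs show "owedge (owedge a b) c vs = owedge a (owedge b c) vs"
  proof (induction vs arbitrary: a b c)
    case Nil
    then show ?case by (simp add: owedge_Nil)
  next
    case (Cons v vs)
    have "owedge (owedge a b) c (v # vs) = owedge (owedge (contract v a) b) c vs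
        + owedge (owedge (grade_inv a) (contract v b)) c vs
        + owedge (owedge (grade_inv a) (grade_inv b)) (contract v c) vs"
      by (simp add: owedge_Cons contract_owedge owedge_addL grade_inv_owedge)
    also have "\<dots> = owedge (contract v a) (owedge b c) vs + owedge (grade_inv a) (owedge (contract v b) c) vs
        + owedge (grade_inv a) (owedge (grade_inv b) (contract v c)) vs"
      using Cons by simp
    also have "\<dots> = owedge a (owedge b c) (v # vs)"
      by (simp add: owedge_Cons contract_owedge owedge_addR)
    finally show ?case .
  qed
qed

lemma contract_form_unit: "contract v form_unit = (\<lambda>us. 0)"
  by (rule ext) (simp add: contract_def)

lemma grade_inv_form_unit: "grade_inv form_unit = form_unit"
  by (rule ext) (simp add: grade_inv_def)

lemma owedge_unitL: "owedge form_unit w = w"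
proof (rule ext)
  fix vs show "owedge form_unit w vs = w vs"
    by (induction vs arbitrary: w)
      (simp_all add: owedge_Nil owedge_Cons contract_form_unit grade_inv_form_unit owedge_zeroL,
       simp add: contract_def)
qed

lemma owedge_unitR: "owedge w form_unit = w"
proof (rule ext)
  fix vs show "owedge w form_unit vs = w vs"
    by (induction vs arbitrary: w)
      (simp_all add: owedge_Nil owedge_Cons contract_form_unit grade_inv_form_unit owedge_zeroR,
       simp add: contract_def)
qed

section \<open>Wedge products of 1-forms\<close>

lemma wedge_list_append: "owedge (wedge_list xs) (wedge_list ys) = wedge_list (xs @ ys)"
  by (induction xs) (simp_all add: owedge_unitL owedge_assoc)

lemma pair_mv: "pair x (M *v v) = pair (x v* M) v"
  by (simp add: pair_def matrix_vector_mult_def vector_matrix_mult_def sum_distrib_left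
      sum_distrib_right mult_ac) (rule sum.swap)

lemma pair_lin: "pair (a *s x + b *s y) v = a * pair x v + b * pair y v"
  by (simp add: pair_def algebra_simps sum.distrib sum_distrib_left)

lemma oneform_anticomm: "owedge (oneform x) (oneform y) vs = - owedge (oneform y) (oneform x) vs"
proof (cases vs)
  case Nil then show ?thesis by (simp add: owedge_Nil oneform_def)
next
  case (Cons v us)
  have contract: "contract v (oneform z) = (\<lambda>us. pair z v * form_unit us)" for z
    by (rule ext) (simp add: contract_def oneform_def)
  have inv: "grade_inv (oneform z) = (\<lambda>us. (-1) * oneform z us)" for z
    by (rule ext) (simp add: grade_inv_def oneform_def)
  show ?thesis
    unfolding Cons owedge_Cons contract inv owedge_scaleL owedge_scaleR owedge_unitL owedge_unitR
    by (simp add: algebra_simps)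
qed

lemma oneform_self: "owedge (oneform x) (oneform x) = (\<lambda>vs. 0)"
  using oneform_anticomm[of x x] by (auto simp: fun_eq_iff)

lemma oneform_comm_wedge_list:
  "owedge (oneform x) (wedge_list ys) = (\<lambda>vs. (-1) ^ length ys * owedge (wedge_list ys) (oneform x) vs)"
proof (induction ys)
  case Nil then show ?case by (simp add: owedge_unitL owedge_unitR)
next
  case (Cons y ys)
  have swap: "owedge (oneform x) (oneform y) = (\<lambda>vs. (-1) * owedge (oneform y) (oneform x) vs)"
    using oneform_anticomm[of x y] by (auto simp: fun_eq_iff)
  have "owedge (oneform x) (wedge_list (y # ys)) = owedge (owedge (oneform x) (oneform y)) (wedge_list ys)"
    by (simp add: owedge_assoc)
  also have "\<dots> = (\<lambda>vs. (-1) * owedge (oneform y) (owedge (oneform x) (wedge_list ys)) vs)"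
    by (simp add: swap owedge_scaleL_fun owedge_negL_fun owedge_assoc)
  also have "\<dots> = (\<lambda>vs. (-1) ^ length (y # ys) * owedge (wedge_list (y # ys)) (oneform x) vs)"
    by (simp add: Cons owedge_scaleR_fun owedge_assoc)
  finally show ?case .
qed

lemma wedge_list_comm:
  "owedge (wedge_list xs) (wedge_list ys)
     = (\<lambda>vs. (-1) ^ (length xs * length ys) * owedge (wedge_list ys) (wedge_list xs) vs)"
proof (induction xs)
  case Nil then show ?case by (simp add: owedge_unitL owedge_unitR)
next
  case (Cons x xs)
  have "owedge (wedge_list (x # xs)) (wedge_list ys) = owedge (oneform x) (owedge (wedge_list xs) (wedge_list ys))"
    by (simp add: owedge_assoc)
  also have "\<dots> = (\<lambda>vs. (-1) ^ (length xs * length ys)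
      * owedge (owedge (oneform x) (wedge_list ys)) (wedge_list xs) vs)"
    by (simp add: Cons owedge_scaleR_fun owedge_assoc)
  also have "\<dots> = (\<lambda>vs. (-1) ^ (length xs * length ys) * (-1) ^ length ys
      * owedge (wedge_list ys) (wedge_list (x # xs)) vs)"
    by (simp add: oneform_comm_wedge_list owedge_scaleL_fun owedge_assoc mult.assoc)
  also have "\<dots> = (\<lambda>vs. (-1) ^ (length (x # xs) * length ys) * owedge (wedge_list ys) (wedge_list (x # xs)) vs)"
    by (simp add: power_add mult_ac)
  finally show ?case .
qed

lemma wedge_list_swap_blocks:
  "wedge_list (a @ b @ c @ d) = (\<lambda>vs. (-1) ^ (length b * length c) * wedge_list (a @ c @ b @ d) vs)"
proof -
  have "wedge_list (a @ b @ c @ d)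
      = owedge (wedge_list a) (owedge (owedge (wedge_list b) (wedge_list c)) (wedge_list d))"
    by (simp add: wedge_list_append owedge_assoc)
  also have "\<dots> = (\<lambda>vs. (-1) ^ (length b * length c)
      * owedge (wedge_list a) (owedge (owedge (wedge_list c) (wedge_list b)) (wedge_list d)) vs)"
    by (subst wedge_list_comm) (simp add: owedge_scaleL_fun owedge_scaleR_fun)
  also have "\<dots> = (\<lambda>vs. (-1) ^ (length b * length c) * wedge_list (a @ c @ b @ d) vs)"
    by (simp add: wedge_list_append owedge_assoc)
  finally show ?thesis .
qed

lemma wedge_list_lin_head:
  "wedge_list ((a *s x + b *s y) # l) = (\<lambda>vs. a * wedge_list (x # l) vs + b * wedge_list (y # l) vs)"
proof -
  have "oneform (a *s x + b *s y) = (\<lambda>vs. a * oneform x vs + b * oneform y vs)"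
    by (rule ext) (simp add: oneform_def pair_lin)
  then show ?thesis by (simp add: owedge_addL_fun owedge_scaleL_fun)
qed

lemma wedge_list_repeat: assumes "x \<in> set l" shows "wedge_list (x # l) = (\<lambda>vs. 0)"
proof -
  obtain p q where l: "l = p @ x # q" using assms split_list by metis
  let ?c = "(-1::complex) ^ length p"
  have cc: "?c * ?c = 1" by (simp add: power_mult_distrib[symmetric])
  have swap: "owedge (wedge_list p) (oneform x) = (\<lambda>vs. ?c * owedge (oneform x) (wedge_list p) vs)"
    by (simp add: oneform_comm_wedge_list cc mult.assoc[symmetric])
  have "wedge_list (x # l) = owedge (oneform x) (owedge (owedge (wedge_list p) (oneform x)) (wedge_list q))"
    by (simp add: l wedge_list_append[symmetric] owedge_assoc)
  also have "\<dots> = (\<lambda>vs. ?c * owedge (owedge (owedge (oneform x) (oneform x)) (wedge_list p)) (wedge_list q) vs)"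
    by (simp only: swap owedge_scaleL_fun owedge_scaleR_fun owedge_assoc)
  also have "\<dots> = (\<lambda>vs. 0)"
    by (simp add: oneform_self owedge_zeroL_fun)
  finally show ?thesis .
qed

lemma wedge_list_span_head: assumes "y \<in> vec.span (set l)" shows "wedge_list (y # l) = (\<lambda>vs. 0)"
  using assms
proof (induction rule: vec.span_induct_alt)
  case base
  have zero: "oneform 0 = (\<lambda>vs. 0)" by (rule ext) (simp add: oneform_def pair_def)
  show ?case by (simp only: wedge_list.simps zero owedge_zeroL_fun)
next
  case (step c x y)
  have "c *s x + y = c *s x + 1 *s y" by simp
  then show ?case using step by (simp only: wedge_list_lin_head wedge_list_repeat) simp
qed

lemma wedge_list_dependent:
  assumes "\<not> (distinct l \<and> vec.independent (set l))"
  shows "wedge_list l = (\<lambda>vs. 0)"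
  using assms
proof (induction l)
  case Nil then show ?case by (simp add: vec.dependent_explicit)
next
  case (Cons x l)
  show ?case
  proof (cases "distinct l \<and> vec.independent (set l)")
    case False
    then show ?thesis using Cons.IH by (simp add: owedge_zeroR_fun)
  next
    case True
    show ?thesis
    proof (cases "x \<in> set l")
      case True then show ?thesis by (rule wedge_list_repeat)
    next
      case False
      with True Cons.prems have "x \<in> vec.span (set l)"
        using vec.independent_insert by fastforce
      then show ?thesis by (rule wedge_list_span_head)
    qed
  qed
qed

lemma wedge_list_project:
  assumes "\<forall>x\<in>set L. x - \<pi> x \<in> vec.span (set T)"
  shows "wedge_list (L @ T) = wedge_list (map \<pi> L @ T)"
  using assms
proof (induction L)
  case Nil then show ?case by simp
next
  case (Cons x L)
  have sp: "x - \<pi> x \<in> vec.span (set (map \<pi> L @ T))"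
    using Cons.prems vec.span_mono[of "set T" "set (map \<pi> L @ T)"] by auto
  have "x = 1 *s \<pi> x + 1 *s (x - \<pi> x)" by simp
  then have "wedge_list (x # map \<pi> L @ T)
      = (\<lambda>vs. 1 * wedge_list (\<pi> x # map \<pi> L @ T) vs + 1 * wedge_list ((x - \<pi> x) # map \<pi> L @ T) vs)"
    by (metis wedge_list_lin_head)
  also have "\<dots> = wedge_list (\<pi> x # map \<pi> L @ T)"
    using wedge_list_span_head[OF sp] by simp
  finally show ?case using Cons by simp
qed

lemma owedge_map: "owedge a b (map f vs) = owedge (\<lambda>us. a (map f us)) (\<lambda>us. b (map f us)) vs"
  by (simp add: owedge_def nths_map)

lemma wedge_list_map: "wedge_list xs (map (\<lambda>v. M *v v) vs) = wedge_list (map (\<lambda>x. x v* M) xs) vs"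
proof (induction xs arbitrary: vs)
  case Nil then show ?case by simp
next
  case (Cons x xs)
  have oneform_map: "oneform x (map (\<lambda>v. M *v v) us) = oneform (x v* M) us" for us
    by (cases us) (auto simp: oneform_def pair_mv)
  show ?case
    by (simp add: owedge_map oneform_map Cons del: wedge_list.simps(1))
qed

section \<open>Linear algebra of coordinate spaces\<close>

lemma span_Int_indep:
  fixes B D :: "('a::field^'n) set"
  assumes ind: "vec.independent (B \<union> D)" and disj: "B \<inter> D = {}"
  shows "vec.span B \<inter> vec.span D = {0}"
proof -
  have fin: "finite (B \<union> D)" using ind vec.finiteI_independent by blast
  have iB: "vec.independent B" using ind vec.independent_mono by blast
  have iD: "vec.independent D" using ind vec.independent_mono by blast
  have s: "vec.subspace (vec.span B)" "vec.subspace (vec.span D)" by (rule vec.subspace_span)+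
  have 1: "vec.dim {x + y |x y. x \<in> vec.span B \<and> y \<in> vec.span D} + vec.dim (vec.span B \<inter> vec.span D)
        = vec.dim (vec.span B) + vec.dim (vec.span D)"
    by (rule vec.dim_sums_Int[OF s])
  have 2: "{x + y |x y. x \<in> vec.span B \<and> y \<in> vec.span D} = vec.span (B \<union> D)"
    by (rule vec.span_Un[symmetric])
  have 3: "vec.dim (vec.span (B \<union> D)) = card (B \<union> D)"
    using vec.dim_span_eq_card_independent[OF ind] .
  have 4: "vec.dim (vec.span B) = card B" using vec.dim_span_eq_card_independent[OF iB] .
  have 5: "vec.dim (vec.span D) = card D" using vec.dim_span_eq_card_independent[OF iD] .
  have 6: "card (B \<union> D) = card B + card D"
    using fin disj by (simp add: card_Un_disjoint)
  have "vec.dim (vec.span B \<inter> vec.span D) = 0" using 1 unfolding 2 3 4 5 6 by linarith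
  then have "vec.span B \<inter> vec.span D \<subseteq> {0}" by (rule vec.dim_eq_0[THEN iffD1])
  then show ?thesis using vec.span_zero[of B] vec.span_zero[of D] by auto
qed

text \<open>If B is a basis of the kernel of a linear map f, extended to a basis C of the whole
  space, then f is injective on the span of the added vectors C - B and has the same range
  there; this is the core of rank-nullity.\<close>
lemma linear_complement_of_kernel:
  fixes f :: "'a::field^'n \<Rightarrow> 'a^'m"
  assumes lf: "Vector_Spaces.linear (*s) (*s) f"
    and B: "B \<subseteq> {x. f x = 0}" "{x. f x = 0} \<subseteq> vec.span B"
    and C: "B \<subseteq> C" "vec.independent C" "UNIV \<subseteq> vec.span C"
  shows "inj_on f (vec.span (C - B))" and "range f = f ` vec.span (C - B)"
proof -
  let ?D = "C - B"
  have BD: "B \<union> ?D = C" using C(1) by blast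
  have Int0: "vec.span B \<inter> vec.span ?D = {0}"
    by (rule span_Int_indep) (simp_all only: BD C(2) Diff_disjoint not_False_eq_True)
  show "inj_on f (vec.span ?D)"
  proof (rule inj_onI)
    fix x y assume x: "x \<in> vec.span ?D" and y: "y \<in> vec.span ?D" and e: "f x = f y"
    have "f (x - y) = 0" using e vec.linear_diff[OF lf] by simp
    then have "x - y \<in> vec.span B" using B(2) by auto
    moreover have "x - y \<in> vec.span ?D" using x y by (rule vec.span_diff)
    ultimately have "x - y \<in> {0}" using Int0 by blast
    then show "x = y" by simp
  qed
  show "range f = f ` vec.span ?D"
  proof (intro subset_antisym subsetI)
    fix z assume "z \<in> range f"
    then obtain x where z: "z = f x" by auto
    have "x \<in> vec.span (B \<union> ?D)" unfolding BD using C(3) by blast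
    then obtain b d where bd: "b \<in> vec.span B" "d \<in> vec.span ?D" "x = b + d"
      unfolding vec.span_Un by blast
    have "f b = 0"
      by (rule vec.linear_eq_0_on_span[OF lf _ bd(1)]) (use B(1) in auto)
    then have "z = f d" using z bd(3) vec.linear_add[OF lf] by simp
    then show "z \<in> f ` vec.span ?D" using bd(2) by blast
  qed auto
qed

lemma rank_nullity:
  fixes f :: "'a::field^'n \<Rightarrow> 'a^'m"
  assumes lf: "Vector_Spaces.linear (*s) (*s) f"
  shows "vec.dim {x. f x = 0} + vec.dim (range f) = CARD('n)"
proof -
  let ?K = "{x. f x = 0}"
  obtain B where B: "B \<subseteq> ?K" "vec.independent B" "?K \<subseteq> vec.span B" "card B = vec.dim ?K"
    using vec.basis_exists[of ?K] by metis
  obtain C where C: "B \<subseteq> C" "vec.independent C" "UNIV \<subseteq> vec.span C"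
    using vec.maximal_independent_subset_extend[of B UNIV] B(2) by (metis subset_UNIV)
  note complement = linear_complement_of_kernel[OF lf B(1,3) C]
  have cardC: "card C = CARD('n)"
    using vec.basis_card_eq_dim[of C UNIV] C vec_dim_card by auto
  have finC: "finite C" using C(2) by (rule vec.finiteI_independent)
  have indD: "vec.independent (C - B)" using C(2) by (rule vec.independent_mono) blast
  have "vec.dim (range f) = vec.dim (vec.span (C - B))"
    unfolding complement(2) by (rule vec.dim_image_eq[OF lf]) (simp add: complement(1) vec.span_span)
  also have "\<dots> = card C - card B"
    using vec.dim_span_eq_card_independent[OF indD] finC C(1) by (simp add: card_Diff_subset finite_subset)
  finally show ?thesis using B(4) cardC card_mono[OF finC C(1)] by simp
qed

lemma full_of_dim: assumes S: "vec.subspace (S :: ('a::field^'n) set)" and d: "vec.dim S = CARD('n)"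
  shows "S = UNIV"
  by (rule vec.subspace_dim_equal[OF S vec.subspace_UNIV]) (simp_all add: d vec_dim_card card_cart_basis)

lemma span_Un_sub: assumes S: "vec.subspace S" and T: "vec.subspace T"
  shows "vec.span (S \<union> T) = {x + y |x y. x \<in> S \<and> y \<in> T}"
proof -
  have e1: "vec.span S = S" using S by (simp add: vec.span_eq_iff)
  have e2: "vec.span T = T" using T by (simp add: vec.span_eq_iff)
  show ?thesis by (subst vec.span_Un) (simp only: e1 e2)
qed

lemma sum_full:
  assumes S: "vec.subspace (S :: ('a::field^'n) set)" and T: "vec.subspace T"
    and i: "S \<inter> T \<subseteq> {0}" and d: "vec.dim S + vec.dim T = CARD('n)"
  shows "\<exists>a\<in>S. \<exists>b\<in>T. x = a + b"
proof -
  let ?ST = "{x + y |x y. x \<in> S \<and> y \<in> T}"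
  have "vec.dim ?ST + vec.dim (S \<inter> T) = vec.dim S + vec.dim T" by (rule vec.dim_sums_Int[OF S T])
  moreover have "vec.dim (S \<inter> T) = 0" using i by (rule vec.dim_eq_0[THEN iffD2])
  ultimately have "vec.dim ?ST = CARD('n)" using d by simp
  moreover have "vec.subspace ?ST"
  proof -
    have "?ST = vec.span (S \<union> T)" using span_Un_sub[OF S T] by simp
    then show ?thesis by (simp add: vec.subspace_span)
  qed
  ultimately have "?ST = UNIV" using full_of_dim by blast
  then have "x \<in> ?ST" by simp
  then show ?thesis by blast
qed

lemma span_of_indep_list:
  assumes ind: "vec.independent (set l)" and dl: "distinct l" and sub: "set l \<subseteq> V"
    and V: "vec.subspace V" and len: "length l = vec.dim V"
  shows "vec.span (set l) = V"
proof (rule vec.span_subspace[OF sub _ V])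
  have "card (set l) = vec.dim V" using dl len by (simp add: distinct_card)
  then show "V \<subseteq> vec.span (set l)" using vec.card_eq_dim[OF sub] ind by simp
qed

section \<open>Hermitian forms and orthogonal complements\<close>

lemma herm_linL: "hermitian_inner h \<Longrightarrow> h (a *s u + b *s v) w = a * h u w + b * h v w"
  by (drule hermitian_inner_def[THEN iffD1, THEN conjunct1, rule_format])
lemma herm_sym: "hermitian_inner h \<Longrightarrow> h v w = cnj (h w v)"
  by (drule hermitian_inner_def[THEN iffD1, THEN conjunct2, THEN conjunct1, rule_format])
lemma herm_pos: assumes H: "hermitian_inner h" and z: "h v v = 0" shows "v = 0"
proof (rule ccontr)
  assume "v \<noteq> 0"
  then have "Re (h v v) > 0" using H[unfolded hermitian_inner_def, THEN conjunct2, THEN conjunct2, rule_format, of v] by simp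
  with z show False by simp
qed

lemma herm_addL: "hermitian_inner h \<Longrightarrow> h (u + v) w = h u w + h v w"
  using herm_linL[of h 1 u 1 v w] by simp
lemma herm_scaleL: "hermitian_inner h \<Longrightarrow> h (a *s u) w = a * h u w"
  using herm_linL[of h a u 0 u w] by simp
lemma herm_zeroL: "hermitian_inner h \<Longrightarrow> h 0 w = 0"
  using herm_scaleL[of h 0 0 w] by simp
lemma herm_addR: assumes H: "hermitian_inner h" shows "h w (u + v) = h w u + h w v"
  using herm_sym[OF H, of w "u+v"] herm_sym[OF H, of w u] herm_sym[OF H, of w v] herm_addL[OF H, of u v w]
  by simp
lemma herm_scaleR: assumes H: "hermitian_inner h" shows "h w (a *s u) = cnj a * h w u"
  using herm_sym[OF H, of w "a *s u"] herm_sym[OF H, of w u] herm_scaleL[OF H, of a u w]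
  by simp
lemma herm_zeroR: assumes H: "hermitian_inner h" shows "h w 0 = 0"
  using herm_sym[OF H, of w 0] herm_zeroL[OF H, of w] by simp
lemma herm_diffL: assumes H: "hermitian_inner h" shows "h (u - v) w = h u w - h v w"
  using herm_linL[OF H, of 1 u "-1" v w] by simp
lemma herm_diffR: assumes H: "hermitian_inner h" shows "h w (u - v) = h w u - h w v"
  using herm_sym[OF H, of w "u-v"] herm_sym[OF H, of w u] herm_sym[OF H, of w v] herm_diffL[OF H, of u v w]
  by simp

lemma perp_subspace: assumes H: "hermitian_inner h" shows "vec.subspace (perp h W)"
  by (rule vec.subspaceI) (auto simp: perp_def herm_zeroR[OF H] herm_addR[OF H] herm_scaleR[OF H])

lemma perp_antimono: "A \<subseteq> B \<Longrightarrow> perp h B \<subseteq> perp h A"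
  by (auto simp: perp_def)

lemma perp_span: assumes H: "hermitian_inner h" shows "perp h (vec.span W) = perp h W"
proof
  show "perp h (vec.span W) \<subseteq> perp h W" by (rule perp_antimono) (rule vec.span_superset)
  show "perp h W \<subseteq> perp h (vec.span W)"
  proof
    fix u assume u: "u \<in> perp h W"
    have "\<forall>w\<in>vec.span W. h w u = 0"
    proof
      fix w assume "w \<in> vec.span W"
      then show "h w u = 0"
      proof (induction rule: vec.span_induct_alt)
        case base then show ?case by (rule herm_zeroL[OF H])
      next
        case (step c x y) then show ?case using u by (simp add: herm_addL[OF H] herm_scaleL[OF H] perp_def)
      qed
    qed
    then show "u \<in> perp h (vec.span W)" by (simp add: perp_def)
  qed
qed

lemma perp_Int: assumes H: "hermitian_inner h" shows "W \<inter> perp h W \<subseteq> {0}"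
proof
  fix w assume "w \<in> W \<inter> perp h W"
  then have "h w w = 0" by (auto simp: perp_def)
  then show "w \<in> {0}" using herm_pos[OF H] by simp
qed

lemma dim_perp_lower:
  assumes H: "hermitian_inner h" and fB: "finite B" and cB: "card B \<le> CARD('n)"
  shows "CARD('n) \<le> vec.dim (perp h (B :: (complex^'n) set)) + card B"
proof -
  obtain \<sigma> :: "complex^'n \<Rightarrow> 'n" where \<sigma>: "\<sigma> ` B \<subseteq> UNIV" "inj_on \<sigma> B"
    using card_le_inj[OF fB finite_class.finite_UNIV] cB by auto
  define \<beta> where "\<beta> j = (if j \<in> \<sigma> ` B then inv_into B \<sigma> j else 0)" for j
  define L where "L u = (\<chi> j. cnj (h (\<beta> j) u))" for u
  have lin: "Vector_Spaces.linear (*s) (*s) L"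
    unfolding Vector_Spaces.linear_iff
  proof (intro conjI allI)
    show "vector_space ((*s) :: complex \<Rightarrow> complex^'n \<Rightarrow> _)" by (rule vec.vector_space_axioms)
    show "vector_space ((*s) :: complex \<Rightarrow> complex^'n \<Rightarrow> _)" by (rule vec.vector_space_axioms)
    fix x y show "L (x + y) = L x + L y"
      by (simp add: L_def herm_addR[OF H] vec_eq_iff)
  next
    fix c x show "L (c *s x) = c *s L x"
      by (simp add: L_def herm_scaleR[OF H] vec_eq_iff)
  qed
  have ker: "{x. L x = 0} = perp h B"
  proof (intro Set.set_eqI iffI)
    fix u assume "u \<in> {x. L x = 0}"
    then have "\<forall>j. h (\<beta> j) u = 0" by (simp add: L_def vec_eq_iff)
    then have "\<forall>b\<in>B. h b u = 0"
      by (metis (no_types, lifting) \<beta>_def \<sigma>(2) image_eqI inv_into_f_f)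
    then show "u \<in> perp h B" by (simp add: perp_def)
  next
    fix u assume "u \<in> perp h B"
    then have "\<forall>j. h (\<beta> j) u = 0"
      by (auto simp: perp_def \<beta>_def herm_zeroL[OF H] inv_into_into)
    then show "u \<in> {x. L x = 0}" by (simp add: L_def vec_eq_iff)
  qed
  have rL: "range L \<subseteq> {x. \<forall>i. i \<notin> \<sigma> ` B \<longrightarrow> x $ i = 0}"
    by (auto simp: L_def \<beta>_def herm_zeroL[OF H])
  have "vec.dim (range L) \<le> card (\<sigma> ` B)"
    by (rule order.trans[OF vec.dim_subset[OF rL]]) (simp only: dim_substandard_cart order.refl)
  also have "\<dots> = card B" using \<sigma>(2) by (rule card_image)
  finally show ?thesis using rank_nullity[OF lin] ker by simp
qed

lemma dim_perp:
  assumes H: "hermitian_inner h" and W: "vec.subspace (W :: (complex^'n) set)"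
  shows "vec.dim W + vec.dim (perp h W) = CARD('n)"
proof (rule antisym)
  obtain B where B: "B \<subseteq> W" "vec.independent B" "W \<subseteq> vec.span B" "card B = vec.dim W"
    using vec.basis_exists[of W] by metis
  have "vec.span B = W" using B vec.span_subspace W by (metis)
  then have pB: "perp h W = perp h B" using perp_span[OF H, of B] by simp
  have fB: "finite B" using B(2) by (rule vec.finiteI_independent)
  have "card B \<le> CARD('n)" using B(4) dim_subset_UNIV_cart_gen[of W] by simp
  from dim_perp_lower[OF H fB this] show "CARD('n) \<le> vec.dim W + vec.dim (perp h W)"
    using pB B(4) by simp
next
  have sP: "vec.subspace (perp h W)" by (rule perp_subspace[OF H])
  have "vec.dim {x + y |x y. x \<in> W \<and> y \<in> perp h W} + vec.dim (W \<inter> perp h W) = vec.dim W + vec.dim (perp h W)"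
    by (rule vec.dim_sums_Int[OF W sP])
  moreover have "vec.dim (W \<inter> perp h W) = 0"
    by (rule vec.dim_eq_0[THEN iffD2]) (rule perp_Int[OF H])
  moreover have "vec.dim {x + y |x y. x \<in> W \<and> y \<in> perp h W} \<le> CARD('n)"
    by (rule dim_subset_UNIV_cart_gen)
  ultimately show "vec.dim W + vec.dim (perp h W) \<le> CARD('n)" by linarith
qed

lemma perp_perp:
  assumes H: "hermitian_inner h" and W: "vec.subspace (W :: (complex^'n) set)"
  shows "perp h (perp h W) = W"
proof -
  have sub: "W \<subseteq> perp h (perp h W)"
  proof
    fix w assume "w \<in> W"
    then show "w \<in> perp h (perp h W)"
      by (auto simp: perp_def) (metis complex_cnj_zero herm_sym[OF H])
  qed
  have "vec.dim (perp h (perp h W)) = vec.dim W"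
    using dim_perp[OF H W] dim_perp[OF H perp_subspace[OF H, of W]] by simp
  then show ?thesis
    using vec.subspace_dim_equal[OF W perp_subspace[OF H] sub] by simp
qed


lemma perp_UNIV: assumes H: "hermitian_inner h" shows "perp h UNIV = {0}"
proof
  show "perp h UNIV \<subseteq> {0}" using perp_Int[OF H, of UNIV] by simp
  show "{0} \<subseteq> perp h UNIV" using vec.subspace_0[OF perp_subspace[OF H]] by simp
qed

section \<open>Annihilators\<close>

text \<open>The annihilator of a set of vectors is the set of functionals vanishing on it.  The dual
  subspace W^* used in the definition of Z and B is the annihilator of the orthogonal
  complement of W.\<close>

definition Ann :: "(complex^'n) set \<Rightarrow> (complex^'n) set" where
  "Ann X = {\<xi>. \<forall>u\<in>X. pair \<xi> u = 0}"

lemma pair_linR: "pair \<xi> (a *s u + b *s v) = a * pair \<xi> u + b * pair \<xi> v"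
  by (simp add: pair_def algebra_simps sum.distrib sum_distrib_left)
lemma pair_zeroR: "pair \<xi> 0 = 0"
  by (simp add: pair_def)

lemma Ann_subspace: "vec.subspace (Ann X)"
proof (rule vec.subspaceI)
  show "0 \<in> Ann X" by (simp add: Ann_def pair_def)
next
  fix x y assume "x \<in> Ann X" "y \<in> Ann X"
  then show "x + y \<in> Ann X" by (simp add: Ann_def pair_def algebra_simps sum.distrib)
next
  fix c x assume "x \<in> Ann X"
  then show "c *s x \<in> Ann X" by (simp add: Ann_def pair_def algebra_simps sum_distrib_left[symmetric])
qed

lemma Ann_antimono: "A \<subseteq> B \<Longrightarrow> Ann B \<subseteq> Ann A"
  by (auto simp: Ann_def)

lemma Ann_Un: "Ann (A \<union> B) = Ann A \<inter> Ann B"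
  by (auto simp: Ann_def)

lemma Ann_span: "Ann (vec.span X) = Ann X"
proof
  show "Ann (vec.span X) \<subseteq> Ann X" by (rule Ann_antimono) (rule vec.span_superset)
  show "Ann X \<subseteq> Ann (vec.span X)"
  proof
    fix \<xi> assume x: "\<xi> \<in> Ann X"
    have "\<forall>u\<in>vec.span X. pair \<xi> u = 0"
    proof
      fix u assume "u \<in> vec.span X"
      then show "pair \<xi> u = 0"
      proof (induction rule: vec.span_induct_alt)
        case base then show ?case by (rule pair_zeroR)
      next
        case (step c x y)
        have "pair \<xi> (c *s x + y) = pair \<xi> (c *s x + 1 *s y)" by simp
        also have "\<dots> = c * pair \<xi> x + 1 * pair \<xi> y" by (rule pair_linR)
        finally show ?case using step x by (simp add: Ann_def)
      qed
    qed
    then show "\<xi> \<in> Ann (vec.span X)" by (simp add: Ann_def)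
  qed
qed

lemma pair_axis: "pair \<xi> (axis i 1) = \<xi> $ i"
proof -
  have "pair \<xi> (axis i 1) = (\<Sum>j\<in>UNIV. if j = i then \<xi> $ j else 0)"
    unfolding pair_def by (rule sum.cong) (auto simp: axis_def)
  then show ?thesis by simp
qed

lemma Ann_UNIV: "Ann UNIV = {0}"
proof
  show "Ann UNIV \<subseteq> {0}"
  proof
    fix \<xi> assume "\<xi> \<in> Ann UNIV"
    then have "\<forall>i. \<xi> $ i = 0" by (simp add: Ann_def pair_axis[symmetric])
    then show "\<xi> \<in> {0}" by (simp add: vec_eq_iff)
  qed
  show "{0} \<subseteq> Ann UNIV" by (simp add: Ann_def pair_def)
qed

text \<open>Annihilators are orthogonal complements for the standard Hermitian form after complex
  conjugation of coordinates; this transfers the dimension formula.\<close>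

definition cv :: "complex^'n \<Rightarrow> complex^'n" where "cv x = (\<chi> i. cnj (x $ i))"
definition sform :: "complex^'n \<Rightarrow> complex^'n \<Rightarrow> complex" where "sform x y = pair x (cv y)"

lemma cv_cv[simp]: "cv (cv x) = x" by (simp add: cv_def vec_eq_iff)
lemma cv_add: "cv (x + y) = cv x + cv y" by (simp add: cv_def vec_eq_iff)
lemma cv_scale: "cv (c *s x) = cnj c *s cv x" by (simp add: cv_def vec_eq_iff)
lemma cv_zero[simp]: "cv 0 = 0" by (simp add: cv_def vec_eq_iff)
lemma cv_sum: "cv (sum f A) = (\<Sum>a\<in>A. cv (f a))" by (simp add: cv_def vec_eq_iff)
lemma inj_cv: "inj cv" by (metis cv_cv injI)

lemma sform_herm: "hermitian_inner sform"
  unfolding hermitian_inner_def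
proof (intro conjI allI impI)
  fix a b u v w show "sform (a *s u + b *s v) w = a * sform u w + b * sform v w"
    by (simp add: sform_def pair_def algebra_simps sum.distrib sum_distrib_left)
next
  fix v w :: "complex^'n" show "sform v w = cnj (sform w v)"
    by (simp add: sform_def pair_def cv_def mult.commute)
next
  fix v :: "complex^'n" assume "v \<noteq> 0"
  then obtain i where i: "v $ i \<noteq> 0" by (auto simp: vec_eq_iff)
  have e: "sform v v = (\<Sum>j\<in>UNIV. complex_of_real ((cmod (v $ j))\<^sup>2))"
    by (simp add: sform_def pair_def cv_def complex_mult_cnj cmod_def)
  show "Im (sform v v) = 0" by (simp add: e)
  have "0 < (cmod (v $ i))\<^sup>2" using i by simp
  also have "\<dots> \<le> (\<Sum>j\<in>UNIV. (cmod (v $ j))\<^sup>2)"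
    by (rule member_le_sum) auto
  finally show "0 < Re (sform v v)" by (simp add: e)
qed

lemma Ann_eq_perp: "Ann X = perp sform (cv ` X)"
proof -
  have e: "sform (cv u) \<xi> = cnj (pair \<xi> u)" for u \<xi> :: "complex^'n"
    by (simp add: sform_def pair_def cv_def mult.commute)
  show ?thesis by (auto simp: Ann_def perp_def e)
qed

lemma span_cv: "cv ` vec.span S \<subseteq> vec.span (cv ` S)"
proof
  fix y assume "y \<in> cv ` vec.span S"
  then obtain x where x: "x \<in> vec.span S" "y = cv x" by blast
  have "cv x \<in> vec.span (cv ` S)"
    using x(1)
  proof (induction rule: vec.span_induct_alt)
    case base then show ?case by (simp add: vec.span_zero)
  next
    case (step c x y)
    have "cv (c *s x + y) = cnj c *s cv x + cv y" by (simp add: cv_add cv_scale)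
    moreover have "cv x \<in> vec.span (cv ` S)" using step(1) by (simp add: vec.span_base)
    ultimately show ?case using step(2) by (simp add: vec.span_add vec.span_scale)
  qed
  then show "y \<in> vec.span (cv ` S)" using x by simp
qed

lemma indep_cv: assumes ind: "vec.independent S" shows "vec.independent (cv ` S)"
proof
  assume "vec.dependent (cv ` S)"
  then obtain t u where t: "finite t" "t \<subseteq> cv ` S" "(\<Sum>v\<in>t. u v *s v) = 0" "\<exists>v\<in>t. u v \<noteq> 0"
    unfolding vec.dependent_explicit by blast
  define t' where "t' = cv ` t"
  define u' where "u' x = cnj (u (cv x))" for x
  have "t' \<subseteq> S" using t(2) by (auto simp: t'_def)
  moreover have "finite t'" using t(1) by (simp add: t'_def)
  moreover have "(\<Sum>v\<in>t'. u' v *s v) = 0"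
  proof -
    have "(\<Sum>v\<in>t'. u' v *s v) = (\<Sum>w\<in>t. u' (cv w) *s cv w)"
      unfolding t'_def by (rule sum.reindex[unfolded comp_def]) (rule inj_on_subset[OF inj_cv], simp)
    also have "\<dots> = cv (\<Sum>w\<in>t. u w *s w)" by (simp add: cv_sum cv_scale u'_def)
    finally show ?thesis using t(3) by simp
  qed
  moreover have "\<exists>v\<in>t'. u' v \<noteq> 0" using t(4) by (auto simp: t'_def u'_def)
  ultimately have "vec.dependent S" unfolding vec.dependent_explicit by blast
  then show False using ind by simp
qed

lemma dim_cv: "vec.dim (cv ` W) = vec.dim W"
proof -
  obtain B where B: "B \<subseteq> W" "vec.independent B" "W \<subseteq> vec.span B" "card B = vec.dim W"
    using vec.basis_exists[of W] by metis
  have "cv ` W \<subseteq> cv ` vec.span B" using B(3) by (rule image_mono)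
  also have "\<dots> \<subseteq> vec.span (cv ` B)" by (rule span_cv)
  finally have sp: "cv ` W \<subseteq> vec.span (cv ` B)" .
  have "card (cv ` B) = vec.dim (cv ` W)"
    by (rule vec.basis_card_eq_dim) (use B(1) sp indep_cv[OF B(2)] in auto)
  moreover have "card (cv ` B) = card B" by (rule card_image) (rule inj_on_subset[OF inj_cv], simp)
  ultimately show ?thesis using B(4) by simp
qed

lemma subspace_cv: assumes W: "vec.subspace W" shows "vec.subspace (cv ` W)"
proof (rule vec.subspaceI)
  show "0 \<in> cv ` W" using vec.subspace_0[OF W] by (metis cv_zero image_eqI)
next
  fix x y assume "x \<in> cv ` W" "y \<in> cv ` W"
  then obtain a b where "a \<in> W" "b \<in> W" "x = cv a" "y = cv b" by blast
  then show "x + y \<in> cv ` W" using vec.subspace_add[OF W] by (metis cv_add image_eqI)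
next
  fix c x assume "x \<in> cv ` W"
  then obtain a where "a \<in> W" "x = cv a" by blast
  then have "c *s x = cv (cnj c *s a)" by (simp add: cv_scale)
  then show "c *s x \<in> cv ` W" using vec.subspace_scale[OF W \<open>a \<in> W\<close>] by blast
qed

lemma dim_Ann: assumes W: "vec.subspace (W :: (complex^'n) set)"
  shows "vec.dim (Ann W) + vec.dim W = CARD('n)"
  using dim_perp[OF sform_herm subspace_cv[OF W]] by (simp add: Ann_eq_perp dim_cv)

lemma dual_decomposition:
  assumes H: "hermitian_inner h" and W: "vec.subspace (W :: (complex^'n) set)"
  shows "\<exists>a\<in>Ann (perp h W). \<xi> - a \<in> Ann W"
proof -
  have sP: "vec.subspace (perp h W)" by (rule perp_subspace[OF H])
  have dP: "vec.dim W + vec.dim (perp h W) = CARD('n)" by (rule dim_perp[OF H W])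
  have "{x + y |x y. x \<in> W \<and> y \<in> perp h W} = UNIV"
    using sum_full[OF W sP perp_Int[OF H] dP] by blast
  then have full: "vec.span (W \<union> perp h W) = UNIV" using span_Un_sub[OF W sP] by simp
  have "Ann (perp h W) \<inter> Ann W = Ann (vec.span (W \<union> perp h W))"
    by (simp add: Ann_span Ann_Un Int_commute)
  then have "Ann (perp h W) \<inter> Ann W \<subseteq> {0}" by (simp add: full Ann_UNIV)
  moreover have "vec.dim (Ann (perp h W)) + vec.dim (Ann W) = CARD('n)"
    using dim_Ann[OF sP] dim_Ann[OF W] dP by simp
  ultimately obtain a b where "a \<in> Ann (perp h W)" "b \<in> Ann W" "\<xi> = a + b"
    using sum_full[OF Ann_subspace Ann_subspace] by blast
  then show ?thesis by (intro bexI[of _ a]) auto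
qed

lemma dualsub_Ann: "dualsub h W = Ann (perp h W)"
  by (simp add: dualsub_def Ann_def)

section \<open>Fixed spaces of products of unitary maps\<close>

definition unitary_for :: "(complex^'n \<Rightarrow> complex^'n \<Rightarrow> complex) \<Rightarrow> complex^'n^'n \<Rightarrow> bool" where
  "unitary_for h A \<longleftrightarrow> (\<forall>v w. h (A *v v) (A *v w) = h v w)"

lemma fixsp_subspace: "vec.subspace (fixsp A)"
  by (rule vec.subspaceI) (auto simp: fixsp_def matrix_vector_right_distrib vec.scale)

lemma mv_inv: "A' ** A = mat 1 \<Longrightarrow> A' *v (A *v v) = v"
  by (simp add: matrix_vector_mul_assoc)

lemma unitary_displacement_perp:
  assumes H: "hermitian_inner h" and A: "unitary_for h A"
  shows "v - A *v v \<in> perp h (fixsp A)"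
proof -
  have "h w (v - A *v v) = 0" if "w \<in> fixsp A" for w
  proof -
    have "A *v w = w" using that by (simp add: fixsp_def)
    then have "h w (A *v v) = h w v" using A unfolding unitary_for_def by metis
    then show ?thesis by (simp add: herm_diffR[OF H])
  qed
  then show ?thesis by (simp add: perp_def)
qed

lemma unitary_image_perp:
  assumes "unitary_for h A"
  shows "(\<lambda>v. A *v v) ` perp h S \<subseteq> perp h ((\<lambda>v. A *v v) ` S)"
  using assms by (auto simp: perp_def unitary_for_def)

text \<open>If N_A and A(N_B) meet only in 0, the fixed space of AB is the intersection of the
  fixed space of A with the image of the fixed space of B: the two displacements of a fixed
  vector of AB lie in N_A and A(N_B) and cancel.\<close>
lemma fixsp_mult_Int:
  assumes H: "hermitian_inner h" and A: "unitary_for h A" and B: "unitary_for h B"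
    and inv: "A' ** A = mat 1"
    and transversal: "perp h (fixsp A) \<inter> perp h ((\<lambda>v. A *v v) ` fixsp B) \<subseteq> {0}"
  shows "fixsp (A ** B) = fixsp A \<inter> (\<lambda>v. A *v v) ` fixsp B"
proof (intro Set.set_eqI iffI)
  fix v assume "v \<in> fixsp (A ** B)"
  then have Cv: "A *v (B *v v) = v" by (simp add: fixsp_def matrix_vector_mul_assoc)
  have "v - B *v v \<in> perp h (fixsp B)" by (rule unitary_displacement_perp[OF H B])
  then have "A *v (v - B *v v) \<in> perp h ((\<lambda>v. A *v v) ` fixsp B)"
    using unitary_image_perp[OF A] by blast
  then have "- (A *v (v - B *v v)) \<in> perp h ((\<lambda>v. A *v v) ` fixsp B)"
    by (rule vec.subspace_neg[OF perp_subspace[OF H]])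
  moreover have "v - A *v v = - (A *v (v - B *v v))"
    using Cv by (simp add: matrix_vector_mult_diff_distrib)
  ultimately have "v - A *v v \<in> perp h (fixsp A) \<inter> perp h ((\<lambda>v. A *v v) ` fixsp B)"
    using unitary_displacement_perp[OF H A, of v] by simp
  then have Av: "A *v v = v" using transversal by auto
  then have "A' *v (A *v (B *v v)) = A' *v (A *v v)" using Cv by simp
  then have "B *v v = v" by (simp only: mv_inv[OF inv])
  then show "v \<in> fixsp A \<inter> (\<lambda>v. A *v v) ` fixsp B"
    using Av by (auto simp: fixsp_def image_iff intro!: bexI[of _ v])
next
  fix v assume "v \<in> fixsp A \<inter> (\<lambda>v. A *v v) ` fixsp B"
  then obtain u where Av: "A *v v = v" and u: "B *v u = u" "v = A *v u" by (auto simp: fixsp_def)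
  have "A' *v (A *v (A *v u)) = A' *v (A *v u)" using Av u(2) by simp
  then have "A *v u = u" by (simp only: mv_inv[OF inv])
  then show "v \<in> fixsp (A ** B)" using u Av by (simp add: fixsp_def matrix_vector_mul_assoc[symmetric])
qed

lemma span_list_Ann:
  assumes S: "vec.subspace S" and l: "set l \<subseteq> Ann S" "length l = codim S"
    and ind: "distinct l" "vec.independent (set l)"
  shows "vec.span (set l) = Ann S"
  by (rule span_of_indep_list[OF ind(2) ind(1) l(1) Ann_subspace])
    (use dim_Ann[OF S] l(2) in \<open>simp add: codim_def\<close>)

text \<open>Let ys be a basis of N_A^* and ws0 one of N_B^*, so that the
  transported list ws = A.ws0 spans the annihilator of A(U_B).  If ys and ws together are
  independent, then U_A + A(U_B) is everything, the codimensions add up, ys and ws together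
  form a basis of N_(AB)^*, and N_A and A(N_B) lie in N_(AB).\<close>
lemma fixsp_mult_transversal:
  fixes A A' B :: "complex^'n^'n" and h :: "complex^'n \<Rightarrow> complex^'n \<Rightarrow> complex"
  assumes H: "hermitian_inner h" and A: "unitary_for h A" and B: "unitary_for h B"
    and inv: "A' ** A = mat 1"
    and ys: "set ys \<subseteq> Ann (fixsp A)" "length ys = codim (fixsp A)"
    and ws0: "set ws0 \<subseteq> Ann (fixsp B)" "length ws0 = codim (fixsp B)"
    and ws: "ws = map (\<lambda>\<xi>. \<xi> v* A') ws0"
    and ind: "distinct (ys @ ws)" "vec.independent (set (ys @ ws))"
  shows "codim (fixsp (A ** B)) = codim (fixsp A) + codim (fixsp B)"
    and "vec.span (set (ys @ ws)) = Ann (fixsp (A ** B))"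
    and "perp h (fixsp A) \<subseteq> perp h (fixsp (A ** B))"
    and "(\<lambda>v. A *v v) ` perp h (fixsp B) \<subseteq> perp h (fixsp (A ** B))"
proof -
  let ?UA = "fixsp A" and ?UB = "fixsp B" and ?UC = "fixsp (A ** B)"
  let ?AUB = "(\<lambda>v. A *v v) ` ?UB"
  have sUA: "vec.subspace ?UA" and sUB: "vec.subspace ?UB" and sUC: "vec.subspace ?UC"
    by (rule fixsp_subspace)+
  have linA: "Vector_Spaces.linear (*s) (*s) ((*v) A)" by (rule matrix_vector_mul_linear_gen)
  have sAUB: "vec.subspace ?AUB" using vec.linear_subspace_image[OF linA sUB] by simp
  have "inj ((*v) A)" by (rule injI) (metis inv mv_inv)
  then have dAUB: "vec.dim ?AUB = vec.dim ?UB"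
    using vec.dim_image_eq[OF linA, of ?UB] by (simp add: inj_on_def)
  have wsAnn: "set ws \<subseteq> Ann ?AUB"
    using ws0(1) by (auto simp: ws Ann_def pair_mv[symmetric] mv_inv[OF inv])
  have indys: "vec.independent (set ys)" and indws: "vec.independent (set ws)"
    using ind(2) by (rule vec.independent_mono, simp)+
  have spys: "vec.span (set ys) = Ann ?UA"
    by (rule span_list_Ann[OF sUA ys]) (use ind(1) indys in auto)
  have spws: "vec.span (set ws) = Ann ?AUB"
    by (rule span_list_Ann[OF sAUB wsAnn]) (use ind(1) indws ws0(2) ws dAUB in \<open>auto simp: codim_def\<close>)
  have "vec.span (set ys) \<inter> vec.span (set ws) = {0}"
    by (rule span_Int_indep) (use ind in auto)
  then have "Ann (vec.span (?UA \<union> ?AUB)) = {0}" by (simp add: Ann_span Ann_Un spys spws)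
  then have "vec.dim (vec.span (?UA \<union> ?AUB)) = CARD('n)"
    using dim_Ann[OF vec.subspace_span, of "?UA \<union> ?AUB"] by simp
  then have spanfull: "vec.span (?UA \<union> ?AUB) = UNIV" by (rule full_of_dim[OF vec.subspace_span])
  have "perp h ?UA \<inter> perp h ?AUB = perp h (vec.span (?UA \<union> ?AUB))"
    unfolding perp_span[OF H] by (auto simp: perp_def)
  then have transversal: "perp h ?UA \<inter> perp h ?AUB \<subseteq> {0}"
    by (simp add: spanfull perp_UNIV[OF H])
  have UC: "?UC = ?UA \<inter> ?AUB" by (rule fixsp_mult_Int[OF H A B inv transversal])
  have "vec.dim {x + y |x y. x \<in> ?UA \<and> y \<in> ?AUB} + vec.dim (?UA \<inter> ?AUB) = vec.dim ?UA + vec.dim ?AUB"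
    by (rule vec.dim_sums_Int[OF sUA sAUB])
  then have "CARD('n) + vec.dim ?UC = vec.dim ?UA + vec.dim ?UB"
    using spanfull span_Un_sub[OF sUA sAUB] by (simp add: UC vec_dim_card dAUB card_cart_basis)
  moreover have "vec.dim ?UA \<le> CARD('n)" "vec.dim ?UB \<le> CARD('n)" "vec.dim ?UC \<le> CARD('n)"
    by (rule dim_subset_UNIV_cart_gen)+
  ultimately show codim: "codim ?UC = codim ?UA + codim ?UB"
    unfolding codim_def by linarith
  have "set (ys @ ws) \<subseteq> Ann ?UC"
    using ys(1) wsAnn Ann_antimono[of ?UC ?UA] Ann_antimono[of ?UC ?AUB] UC by auto
  then show "vec.span (set (ys @ ws)) = Ann ?UC"
    by (rule span_list_Ann[OF sUC _ _ ind]) (use codim ys(2) ws0(2) ws in simp)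
  show "perp h ?UA \<subseteq> perp h ?UC" using UC by (intro perp_antimono) auto
  show "(\<lambda>v. A *v v) ` perp h ?UB \<subseteq> perp h ?UC"
    using unitary_image_perp[OF A] perp_antimono[of ?UC ?AUB h] UC by blast
qed

section \<open>Spans of functions\<close>

lemma fspan_add: "f \<in> fspan S \<Longrightarrow> g \<in> fspan S \<Longrightarrow> (\<lambda>x. f x + g x) \<in> fspan S"
proof (induction f rule: fspan.induct)
  case fspan_zero then show ?case by simp
next
  case (fspan_step f u c)
  have "(\<lambda>x. c * f x + u x + g x) = (\<lambda>x. c * f x + (u x + g x))" by (simp add: algebra_simps)
  then show ?case using fspan_step by (simp add: fspan.fspan_step)
qed

lemma fspan_scale: "f \<in> fspan S \<Longrightarrow> (\<lambda>x. c * f x) \<in> fspan S"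
proof (induction f rule: fspan.induct)
  case fspan_zero then show ?case using fspan.fspan_zero by simp
next
  case (fspan_step f u c')
  have "(\<lambda>x. c * (c' * f x + u x)) = (\<lambda>x. (c * c') * f x + c * u x)" by (simp add: algebra_simps)
  then show ?case using fspan_step by (simp add: fspan.fspan_step)
qed

lemma fspan_base: "f \<in> S \<Longrightarrow> f \<in> fspan S"
  using fspan.fspan_step[OF _ fspan.fspan_zero, of f S 1] by simp

lemma fspan_sum: "finite I \<Longrightarrow> (\<And>i. i \<in> I \<Longrightarrow> f i \<in> fspan S) \<Longrightarrow> (\<lambda>x. \<Sum>i\<in>I. f i x) \<in> fspan S"
proof (induction I rule: finite_induct)
  case empty then show ?case using fspan.fspan_zero by simp
next
  case (insert i I)
  then show ?case using fspan_add[of "f i" S "\<lambda>x. \<Sum>i\<in>I. f i x"] by simp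
qed

lemma fspan_mono: "S \<subseteq> T \<Longrightarrow> fspan S \<subseteq> fspan T"
proof
  fix f assume ST: "S \<subseteq> T" and f: "f \<in> fspan S"
  show "f \<in> fspan T"
    using f by (induction f rule: fspan.induct) (use ST in \<open>auto intro: fspan.intros\<close>)
qed

lemma fspan_lin:
  assumes x: "x \<in> fspan A" and gen: "\<And>a. a \<in> A \<Longrightarrow> \<Psi> a \<in> fspan T"
    and z: "\<Psi> (\<lambda>z. 0) = (\<lambda>z. 0)"
    and l: "\<And>c a u. \<Psi> (\<lambda>z. c * a z + u z) = (\<lambda>z. c * \<Psi> a z + \<Psi> u z)"
  shows "\<Psi> x \<in> fspan T"
  using x
proof (induction x rule: fspan.induct)
  case fspan_zero then show ?case using z fspan.fspan_zero by simp
next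
  case (fspan_step f u c)
  then show ?case using l gen fspan_add fspan_scale by metis
qed


lemma fspan_subset: assumes "S \<subseteq> fspan T" shows "fspan S \<subseteq> fspan T"
proof
  fix f assume "f \<in> fspan S"
  then show "f \<in> fspan T"
  proof (induction f rule: fspan.induct)
    case fspan_zero show ?case by (rule fspan.fspan_zero)
  next
    case (fspan_step f u c)
    then show ?case using fspan_add[OF fspan_scale[of f T c]] assms by blast
  qed
qed

lemma fspan_bilinear:
  assumes x: "x \<in> fspan S1" and y: "y \<in> fspan S2"
    and gen: "\<And>a b. a \<in> S1 \<Longrightarrow> b \<in> S2 \<Longrightarrow> Bl a b \<in> fspan T"
    and linL: "\<And>c a u b. Bl (\<lambda>z. c * a z + u z) b = (\<lambda>z. c * Bl a b z + Bl u b z)"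
    and linR: "\<And>c a u b. Bl b (\<lambda>z. c * a z + u z) = (\<lambda>z. c * Bl b a z + Bl b u z)"
    and zeroL: "\<And>b. Bl (\<lambda>z. 0) b = (\<lambda>z. 0)" and zeroR: "\<And>a. Bl a (\<lambda>z. 0) = (\<lambda>z. 0)"
  shows "Bl x y \<in> fspan T"
proof (rule fspan_lin[where \<Psi> = "\<lambda>a. Bl a y", OF x _ zeroL linL])
  fix a assume a: "a \<in> S1"
  show "Bl a y \<in> fspan T" by (rule fspan_lin[where \<Psi> = "Bl a", OF y gen[OF a] zeroR linR])
qed
section \<open>Polynomials and ideals\<close>

lemma polyfun_act: "f \<in> polyfun \<Longrightarrow> (\<lambda>\<xi>. f (\<xi> v* M)) \<in> polyfun"
proof (induction f rule: polyfun.induct)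
  case (polyfun_const c) then show ?case by (rule polyfun.polyfun_const)
next
  case (polyfun_lin v)
  have "(\<lambda>\<xi>. pair (\<xi> v* M) v) = (\<lambda>\<xi>. pair \<xi> (M *v v))" by (simp add: pair_mv)
  then show ?case using polyfun.polyfun_lin by simp
next
  case (polyfun_add f g) show ?case by (rule polyfun.polyfun_add[OF polyfun_add.IH])
next
  case (polyfun_mult f g) show ?case by (rule polyfun.polyfun_mult[OF polyfun_mult.IH])
qed

lemma ideal_sub_polyfun: "q \<in> ideal_gen W \<Longrightarrow> q \<in> polyfun"
proof (induction q rule: ideal_gen.induct)
  case ideal_gen_zero then show ?case by (rule polyfun.polyfun_const)
next
  case (ideal_gen_step w f q)
  then show ?case
    by (intro polyfun.polyfun_add polyfun.polyfun_mult polyfun.polyfun_lin) auto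
qed

lemma ideal_mult: "q \<in> ideal_gen W \<Longrightarrow> f \<in> polyfun \<Longrightarrow> (\<lambda>\<xi>. q \<xi> * f \<xi>) \<in> ideal_gen W"
proof (induction q rule: ideal_gen.induct)
  case ideal_gen_zero show ?case by (simp add: ideal_gen.ideal_gen_zero)
next
  case (ideal_gen_step w g q)
  have e: "(\<lambda>\<xi>. (pair \<xi> w * g \<xi> + q \<xi>) * f \<xi>) = (\<lambda>\<xi>. pair \<xi> w * (\<lambda>\<xi>. g \<xi> * f \<xi>) \<xi> + (\<lambda>\<xi>. q \<xi> * f \<xi>) \<xi>)"
    by (simp add: algebra_simps)
  have gf: "(\<lambda>\<xi>. g \<xi> * f \<xi>) \<in> polyfun" by (rule polyfun.polyfun_mult[OF ideal_gen_step(2) ideal_gen_step.prems])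
  have qf: "(\<lambda>\<xi>. q \<xi> * f \<xi>) \<in> ideal_gen W" by (rule ideal_gen_step.IH[OF ideal_gen_step.prems])
  show ?case unfolding e by (rule ideal_gen.ideal_gen_step[OF ideal_gen_step(1) gf qf])
qed

lemma ideal_mono: "W \<subseteq> W' \<Longrightarrow> ideal_gen W \<subseteq> ideal_gen W'"
proof
  fix q assume WW: "W \<subseteq> W'" and q: "q \<in> ideal_gen W"
  show "q \<in> ideal_gen W'"
    using q by (induction q rule: ideal_gen.induct) (use WW in \<open>auto intro: ideal_gen.intros\<close>)
qed

lemma ideal_act: "q \<in> ideal_gen W \<Longrightarrow> (\<lambda>\<xi>. q (\<xi> v* M)) \<in> ideal_gen ((\<lambda>v. M *v v) ` W)"
proof (induction q rule: ideal_gen.induct)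
  case ideal_gen_zero show ?case by (simp add: ideal_gen.ideal_gen_zero)
next
  case (ideal_gen_step w f q)
  have "(\<lambda>\<xi>. pair (\<xi> v* M) w * f (\<xi> v* M) + q (\<xi> v* M))
      = (\<lambda>\<xi>. pair \<xi> (M *v w) * (\<lambda>\<xi>. f (\<xi> v* M)) \<xi> + (\<lambda>\<xi>. q (\<xi> v* M)) \<xi>)"
    by (simp add: pair_mv)
  moreover have "M *v w \<in> (\<lambda>v. M *v v) ` W" using ideal_gen_step by simp
  moreover have "(\<lambda>\<xi>. f (\<xi> v* M)) \<in> polyfun" by (rule polyfun_act[OF ideal_gen_step(2)])
  ultimately show ?case
    using ideal_gen.ideal_gen_step[of "M *v w" "(\<lambda>v. M *v v) ` W" "\<lambda>\<xi>. f (\<xi> v* M)" "\<lambda>\<xi>. q (\<xi> v* M)"]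
      ideal_gen_step.IH by simp
qed

text \<open>Compatibility of the coefficient rings R1 (for A), R2 (for B) and R3 (for AB) with the
  twisted multiplication f * A.f', required only when N_A and A(N_B) lie in N_(AB), which is
  the case in which the product of generators does not vanish.\<close>
definition twisted_mult_closed :: "(complex^'n \<Rightarrow> complex) set \<Rightarrow> (complex^'n \<Rightarrow> complex) set
    \<Rightarrow> (complex^'n \<Rightarrow> complex) set \<Rightarrow> (complex^'n \<Rightarrow> complex^'n \<Rightarrow> complex)
    \<Rightarrow> complex^'n^'n \<Rightarrow> complex^'n^'n \<Rightarrow> bool" where
  "twisted_mult_closed R1 R2 R3 h A B \<longleftrightarrow>
     (perp h (fixsp A) \<subseteq> perp h (fixsp (A ** B)) \<longrightarrow>
      (\<lambda>v. A *v v) ` perp h (fixsp B) \<subseteq> perp h (fixsp (A ** B)) \<longrightarrow>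
      (\<forall>f\<in>R1. \<forall>f'\<in>R2. (\<lambda>xi. f xi * f' (xi v* A)) \<in> R3))"

lemma twisted_mult_closed_polyfun: "twisted_mult_closed polyfun polyfun polyfun h A B"
  by (simp add: twisted_mult_closed_def polyfun.polyfun_mult polyfun_act)

text \<open>Left multiplication by Z preserves B: I(A(N_B)) lies in I(N_(AB)).\<close>
lemma twisted_mult_closed_ideal_right:
  fixes A B :: "complex^'n^'n"
  shows "twisted_mult_closed polyfun (ideal_gen (perp h (fixsp B))) (ideal_gen (perp h (fixsp (A ** B)))) h A B"
  unfolding twisted_mult_closed_def
proof (intro impI ballI)
  fix f f' :: "complex^'n \<Rightarrow> complex" assume sub: "(\<lambda>v. A *v v) ` perp h (fixsp B) \<subseteq> perp h (fixsp (A ** B))"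
    and f: "f \<in> polyfun" and f': "f' \<in> ideal_gen (perp h (fixsp B))"
  have "(\<lambda>xi. f' (xi v* A)) \<in> ideal_gen (perp h (fixsp (A ** B)))"
    using ideal_act[OF f'] ideal_mono[OF sub] by blast
  from ideal_mult[OF this f] show "(\<lambda>xi. f xi * f' (xi v* A)) \<in> ideal_gen (perp h (fixsp (A ** B)))"
    by (simp add: mult.commute)
qed

text \<open>Right multiplication by Z preserves B: I(N_A) lies in I(N_(AB)).\<close>
lemma twisted_mult_closed_ideal_left:
  fixes A B :: "complex^'n^'n"
  shows "twisted_mult_closed (ideal_gen (perp h (fixsp A))) polyfun (ideal_gen (perp h (fixsp (A ** B)))) h A B"
  unfolding twisted_mult_closed_def
proof (intro impI ballI)
  fix f f' :: "complex^'n \<Rightarrow> complex" assume sub: "perp h (fixsp A) \<subseteq> perp h (fixsp (A ** B))"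
    and f: "f \<in> ideal_gen (perp h (fixsp A))" and f': "f' \<in> polyfun"
  have "f \<in> ideal_gen (perp h (fixsp (A ** B)))" using ideal_mono[OF sub] f by blast
  from ideal_mult[OF this polyfun_act[OF f']]
  show "(\<lambda>xi. f xi * f' (xi v* A)) \<in> ideal_gen (perp h (fixsp (A ** B)))" .
qed

section \<open>Products of component generators\<close>

lemma comp_space_scale: "F \<in> comp_space R h M p \<Longrightarrow> (\<lambda>z. c * F z) \<in> comp_space R h M p"
  unfolding comp_space_def by (rule fspan_scale)

lemma comp_space_sum: "finite I \<Longrightarrow> (\<And>i. i \<in> I \<Longrightarrow> f i \<in> comp_space R h M p) \<Longrightarrow>
   (\<lambda>x. \<Sum>i\<in>I. f i x) \<in> comp_space R h M p"
  unfolding comp_space_def by (rule fspan_sum)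

lemma comp_space_mono: "R \<subseteq> R' \<Longrightarrow> comp_space R h M p \<subseteq> comp_space R' h M p"
  unfolding comp_space_def by (rule fspan_mono) blast

text \<open>A wedge ending in a basis T of N_C^* (of length codim U_C) is a generator of the
  degree-p component for C, whatever the leading 1-forms L: they may be projected to U_C^*
  modulo the span of T.\<close>
lemma top_wedge_in_comp_space:
  assumes H: "hermitian_inner h"
    and T: "vec.span (set T) = Ann (fixsp C)" "length T = codim (fixsp C)"
    and fp: "fp \<in> R" and L: "length L + codim (fixsp C) = p"
  shows "(\<lambda>(xi, vs). fp xi * wedge_list (L @ T) vs) \<in> comp_space R h C p"
proof -
  have sUC: "vec.subspace (fixsp C)" by (rule fixsp_subspace)
  define \<pi> where "\<pi> \<xi> = (SOME a. a \<in> Ann (perp h (fixsp C)) \<and> \<xi> - a \<in> vec.span (set T))" for \<xi>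
  have \<pi>: "\<pi> \<xi> \<in> Ann (perp h (fixsp C)) \<and> \<xi> - \<pi> \<xi> \<in> vec.span (set T)" for \<xi>
    unfolding \<pi>_def T(1) by (rule someI_ex) (use dual_decomposition[OF H sUC] in blast)
  have project: "wedge_list (L @ T) = owedge (wedge_list (map \<pi> L)) (wedge_list T)"
    unfolding wedge_list_append by (rule wedge_list_project) (use \<pi> in blast)
  have om: "wedge_list (map \<pi> L) \<in> extpow (dualsub h (fixsp C)) (p - codim (fixsp C))"
    unfolding extpow_def using \<pi> L by (intro fspan_base CollectI exI[of _ "map \<pi> L"]) (auto simp: dualsub_Ann)
  have eta: "wedge_list T \<in> extpow (dualsub h (perp h (fixsp C))) (codim (fixsp C))"
    unfolding extpow_def using T vec.span_superset[of "set T"]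
    by (intro fspan_base) (auto simp: dualsub_Ann perp_perp[OF H sUC])
  show ?thesis unfolding project comp_space_def
    by (rule fspan_base) (use fp om eta L in \<open>auto intro!: exI[of _ fp]\<close>)
qed

definition mat_act :: "complex^'n^'n \<Rightarrow> complex^'n^'n \<Rightarrow> ((complex^'n) \<times> (complex^'n) list \<Rightarrow> complex)
    \<Rightarrow> (complex^'n) \<times> (complex^'n) list \<Rightarrow> complex" where
  "mat_act A A' F = (\<lambda>(xi, vs). F (xi v* A, map (\<lambda>v. A' *v v) vs))"

lemma act_mat_act: "act G rho g F = mat_act (rho g) (rho (inv\<^bsub>G\<^esub> g)) F"
  by (simp add: act_def mat_act_def)

definition elem_gens :: "(complex^'n \<Rightarrow> complex) set \<Rightarrow> (complex^'n \<Rightarrow> complex^'n \<Rightarrow> complex)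
    \<Rightarrow> complex^'n^'n \<Rightarrow> nat \<Rightarrow> ((complex^'n) \<times> (complex^'n) list \<Rightarrow> complex) set" where
  "elem_gens R h A p = {(\<lambda>(xi, vs). f xi * owedge (wedge_list xs) (wedge_list ys) vs) | f xs ys.
      codim (fixsp A) \<le> p \<and> f \<in> R \<and>
      set xs \<subseteq> dualsub h (fixsp A) \<and> length xs = p - codim (fixsp A) \<and>
      set ys \<subseteq> dualsub h (perp h (fixsp A)) \<and> length ys = codim (fixsp A)}"

text \<open>After reordering,
  the product is a wedge of a list ending in the 1-forms of N_A^* and A.N_B^*; it vanishes if
  these are dependent, and otherwise the transversal case applies.\<close>
lemma elem_gens_product:
  fixes A A' B :: "complex^'n^'n" and h :: "complex^'n \<Rightarrow> complex^'n \<Rightarrow> complex"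
  assumes H: "hermitian_inner h" and A: "unitary_for h A" and B: "unitary_for h B"
    and inv: "A' ** A = mat 1" and R: "twisted_mult_closed R1 R2 R3 h A B"
    and a: "a \<in> elem_gens R1 h A p" and b: "b \<in> elem_gens R2 h B q"
  shows "twedge a (mat_act A A' b) \<in> comp_space R3 h (A ** B) (p + q)"
proof -
  obtain f xs ys where a_eq: "a = (\<lambda>(xi, vs). f xi * owedge (wedge_list xs) (wedge_list ys) vs)"
    and f: "f \<in> R1" and cA: "codim (fixsp A) \<le> p" and xs: "length xs = p - codim (fixsp A)"
    and ys: "set ys \<subseteq> dualsub h (perp h (fixsp A))" "length ys = codim (fixsp A)"
    using a unfolding elem_gens_def by blast
  obtain f' zs ws0 where b_eq: "b = (\<lambda>(xi, vs). f' xi * owedge (wedge_list zs) (wedge_list ws0) vs)"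
    and f': "f' \<in> R2" and cB: "codim (fixsp B) \<le> q" and zs: "length zs = q - codim (fixsp B)"
    and ws0: "set ws0 \<subseteq> dualsub h (perp h (fixsp B))" "length ws0 = codim (fixsp B)"
    using b unfolding elem_gens_def by blast
  define zs' where "zs' = map (\<lambda>\<xi>. \<xi> v* A') zs"
  define ws where "ws = map (\<lambda>\<xi>. \<xi> v* A') ws0"
  define fp where "fp xi = f xi * f' (xi v* A)" for xi
  define s where "s = (-1::complex) ^ (length ys * length zs')"
  have transport: "(\<lambda>us. owedge (wedge_list zs) (wedge_list ws0) (map (\<lambda>v. A' *v v) us)) = wedge_list (zs' @ ws)"
    by (rule ext) (simp add: wedge_list_append wedge_list_map zs'_def ws_def del: wedge_list.simps)
  have reorder: "owedge (owedge (wedge_list xs) (wedge_list ys)) (wedge_list (zs' @ ws))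
      = (\<lambda>vs. s * wedge_list ((xs @ zs') @ (ys @ ws)) vs)"
    using wedge_list_swap_blocks[of xs ys zs' ws] by (simp add: wedge_list_append s_def del: wedge_list.simps)
  have prod: "twedge a (mat_act A A' b)
      = (\<lambda>z. s * (\<lambda>(xi, vs). fp xi * wedge_list ((xs @ zs') @ (ys @ ws)) vs) z)"
    unfolding a_eq b_eq twedge_def mat_act_def
    by (auto simp: fun_eq_iff owedge_scaleL owedge_scaleR transport reorder fp_def)
  show ?thesis
  proof (cases "distinct (ys @ ws) \<and> vec.independent (set (ys @ ws))")
    case False
    then have "wedge_list (ys @ ws) = (\<lambda>vs. 0)" by (rule wedge_list_dependent)
    then have "wedge_list ((xs @ zs') @ (ys @ ws)) = (\<lambda>vs. 0)"
      by (simp only: wedge_list_append[symmetric] owedge_zeroR_fun)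
    then have "twedge a (mat_act A A' b) = (\<lambda>z. 0)" by (auto simp: prod)
    then show ?thesis by (simp add: comp_space_def fspan.fspan_zero)
  next
    case True
    have sUA: "vec.subspace (fixsp A)" and sUB: "vec.subspace (fixsp B)" by (rule fixsp_subspace)+
    note transversal = fixsp_mult_transversal[OF H A B inv
        ys(1)[unfolded dualsub_Ann perp_perp[OF H sUA]] ys(2)
        ws0(1)[unfolded dualsub_Ann perp_perp[OF H sUB]] ws0(2) ws_def True[THEN conjunct1] True[THEN conjunct2]]
    have fp: "fp \<in> R3"
      using R transversal(3,4) f f' unfolding twisted_mult_closed_def fp_def by blast
    have "(\<lambda>(xi, vs). fp xi * wedge_list ((xs @ zs') @ (ys @ ws)) vs) \<in> comp_space R3 h (A ** B) (p + q)"
      by (rule top_wedge_in_comp_space[OF H transversal(2) _ fp])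
        (use transversal(1) xs ys(2) zs ws0(2) cA cB in \<open>simp_all add: zs'_def ws_def\<close>)
    from comp_space_scale[OF this, of s] show ?thesis
      by (simp only: prod)
  qed
qed

lemma comp_space_elem: "comp_space R h A p \<subseteq> fspan (elem_gens R h A p)"
  unfolding comp_space_def
proof (rule fspan_subset, clarify)
  fix f om eta assume le: "codim (fixsp A) \<le> p" and f: "f \<in> R"
    and om: "om \<in> extpow (dualsub h (fixsp A)) (p - codim (fixsp A))"
    and eta: "eta \<in> extpow (dualsub h (perp h (fixsp A))) (codim (fixsp A))"
  show "(\<lambda>(xi, vs). f xi * owedge om eta vs) \<in> fspan (elem_gens R h A p)"
  proof (rule fspan_bilinear[where Bl = "\<lambda>om eta. \<lambda>(xi, vs). f xi * owedge om eta vs",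
        OF om[unfolded extpow_def] eta[unfolded extpow_def]])
    fix a b assume "a \<in> {wedge_list xis |xis. set xis \<subseteq> dualsub h (fixsp A) \<and> length xis = p - codim (fixsp A)}"
      and "b \<in> {wedge_list xis |xis. set xis \<subseteq> dualsub h (perp h (fixsp A)) \<and> length xis = codim (fixsp A)}"
    then show "(\<lambda>(xi, vs). f xi * owedge a b vs) \<in> fspan (elem_gens R h A p)"
      using le f unfolding elem_gens_def by (intro fspan_base) blast
  qed (auto simp: fun_eq_iff owedge_linL_fun owedge_linR_fun owedge_zeroL owedge_zeroR
      distrib_left mult.left_commute)
qed

lemma twedge_linL: "twedge (\<lambda>z. c * a z + u z) b = (\<lambda>z. c * twedge a b z + twedge u b z)"
  unfolding twedge_def by (auto simp: fun_eq_iff owedge_linL_fun)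
lemma twedge_linR: "twedge b (\<lambda>z. c * a z + u z) = (\<lambda>z. c * twedge b a z + twedge b u z)"
  unfolding twedge_def by (auto simp: fun_eq_iff owedge_linR_fun)
lemma twedge_zeroL: "twedge (\<lambda>z. 0) b = (\<lambda>z. 0)"
  unfolding twedge_def by (auto simp: fun_eq_iff owedge_zeroL_fun)
lemma twedge_zeroR: "twedge b (\<lambda>z. 0) = (\<lambda>z. 0)"
  unfolding twedge_def by (auto simp: fun_eq_iff owedge_zeroR_fun)
lemma mat_act_lin: "mat_act A A' (\<lambda>z. c * a z + u z) = (\<lambda>z. c * mat_act A A' a z + mat_act A A' u z)"
  unfolding mat_act_def by (auto simp: fun_eq_iff)
lemma mat_act_zero: "mat_act A A' (\<lambda>z. 0) = (\<lambda>z. 0)"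
  unfolding mat_act_def by (auto simp: fun_eq_iff)

lemma comp_space_product:
  fixes A A' B :: "complex^'n^'n" and h :: "complex^'n \<Rightarrow> complex^'n \<Rightarrow> complex"
  assumes H: "hermitian_inner h" and A: "unitary_for h A" and B: "unitary_for h B"
    and inv: "A' ** A = mat 1" and R: "twisted_mult_closed R1 R2 R3 h A B"
    and F: "F \<in> comp_space R1 h A p" and F': "F' \<in> comp_space R2 h B q"
  shows "twedge F (mat_act A A' F') \<in> comp_space R3 h (A ** B) (p + q)"
  using fspan_bilinear[where Bl = "\<lambda>F F'. twedge F (mat_act A A' F')",
      OF subsetD[OF comp_space_elem F] subsetD[OF comp_space_elem F']
      elem_gens_product[OF H A B inv R, unfolded comp_space_def]]
  by (simp add: comp_space_def twedge_linL twedge_linR mat_act_lin mat_act_zero twedge_zeroL twedge_zeroR)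

section \<open>Degrees in the smash product\<close>

text \<open>The degree-r part of a product of forms is the sum over p of the products of the
  degree-p and degree-(r-p) parts, since a shuffle splits a list of length r into sublists
  of complementary lengths.\<close>

lemma len_nths_compl: "length (nths vs S) + length (nths vs (- S)) = length vs"
proof -
  let ?A = "{i. i < length vs \<and> i \<in> S}" and ?B = "{i. i < length vs \<and> i \<in> - S}"
  have "?A \<union> ?B = {..<length vs}" by auto
  moreover have "?A \<inter> ?B = {}" by auto
  moreover have "finite ?A" "finite ?B" by auto
  ultimately have "card ?A + card ?B = length vs" by (metis card_Un_disjoint card_lessThan)
  then show ?thesis by (simp add: length_nths)
qed

lemma sum_delta_split:
  fixes X Y :: complex and a b m r :: nat
  assumes "a + b = m"
  shows "(\<Sum>p\<in>{..r}. (if a = p then X else 0) * (if b = r - p then Y else 0)) = (if m = r then X * Y else 0)"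
proof -
  have "(\<Sum>p\<in>{..r}. (if a = p then X else 0) * (if b = r - p then Y else 0))
      = (\<Sum>p\<in>{..r}. if p = a then (if b = r - p then X * Y else 0) else 0)"
    by (rule sum.cong) auto
  also have "\<dots> = (if a \<in> {..r} then (if b = r - a then X * Y else 0) else 0)"
    by (subst sum.delta) auto
  also have "\<dots> = (if m = r then X * Y else 0)" using assms by auto
  finally show ?thesis .
qed

lemma owedge_hc_sum:
  "(\<Sum>p\<in>{..r}. owedge (\<lambda>ws. if length ws = p then w1 ws else 0) (\<lambda>ws. if length ws = r - p then w2 ws else 0) vs)
   = (if length vs = r then owedge w1 w2 vs else 0)"
proof -
  let ?sg = "\<lambda>S. shuffle_sign (length vs) S"
  have "(\<Sum>p\<in>{..r}. owedge (\<lambda>ws. if length ws = p then w1 ws else 0) (\<lambda>ws. if length ws = r - p then w2 ws else 0) vs)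
      = (\<Sum>S\<in>Pow {..<length vs}. \<Sum>p\<in>{..r}. ?sg S * ((if length (nths vs S) = p then w1 (nths vs S) else 0)
            * (if length (nths vs (- S)) = r - p then w2 (nths vs (- S)) else 0)))"
    unfolding owedge_def by (subst sum.swap) (simp add: mult.assoc)
  also have "\<dots> = (\<Sum>S\<in>Pow {..<length vs}. ?sg S * (if length vs = r then w1 (nths vs S) * w2 (nths vs (- S)) else 0))"
    by (rule sum.cong[OF refl], subst sum_distrib_left[symmetric], subst sum_delta_split[OF len_nths_compl]) simp
  also have "\<dots> = (if length vs = r then owedge w1 w2 vs else 0)"
    by (simp add: owedge_def mult.assoc)
  finally show ?thesis .
qed

lemma hcomp_twedge:
  "hcomp r (twedge F1 F2) = (\<lambda>z. \<Sum>p\<in>{..r}. twedge (hcomp p F1) (hcomp (r - p) F2) z)"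
proof (rule ext, clarify)
  fix xi vs
  have "(\<Sum>p\<in>{..r}. twedge (hcomp p F1) (hcomp (r - p) F2) (xi, vs))
     = (\<Sum>p\<in>{..r}. owedge (\<lambda>ws. if length ws = p then F1 (xi, ws) else 0)
          (\<lambda>ws. if length ws = r - p then F2 (xi, ws) else 0) vs)"
    by (simp add: twedge_def hcomp_def)
  also have "\<dots> = (if length vs = r then owedge (\<lambda>ws. F1 (xi, ws)) (\<lambda>ws. F2 (xi, ws)) vs else 0)"
    by (rule owedge_hc_sum)
  finally show "hcomp r (twedge F1 F2) (xi, vs) = (\<Sum>p\<in>{..r}. twedge (hcomp p F1) (hcomp (r - p) F2) (xi, vs))"
    by (simp add: hcomp_def twedge_def)
qed

lemma hcomp_sum: "hcomp r (\<lambda>z. \<Sum>g\<in>I. T g z) = (\<lambda>z. \<Sum>g\<in>I. hcomp r (T g) z)"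
  by (auto simp: hcomp_def fun_eq_iff)

lemma hcomp_mat_act: "hcomp q (mat_act A A' F) = mat_act A A' (hcomp q F)"
  by (auto simp: hcomp_def mat_act_def fun_eq_iff)

definition graded_space :: "('g, 'b) monoid_scheme \<Rightarrow> ('g \<Rightarrow> complex^'n^'n)
    \<Rightarrow> (complex^'n \<Rightarrow> complex^'n \<Rightarrow> complex) \<Rightarrow> (complex^'n^'n \<Rightarrow> (complex^'n \<Rightarrow> complex) set)
    \<Rightarrow> ('g \<Rightarrow> (complex^'n) \<times> (complex^'n) list \<Rightarrow> complex) set" where
  "graded_space G rho h R = {alpha. (\<forall>g. g \<notin> carrier G \<longrightarrow> alpha g = (\<lambda>_. 0)) \<and>
     (\<forall>g\<in>carrier G. \<forall>p. hcomp p (alpha g) \<in> comp_space (R (rho g)) h (rho g) p)}"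

lemma Zsp_graded: "Zsp G rho h = graded_space G rho h (\<lambda>_. polyfun)"
  by (simp add: Zsp_def graded_space_def)

lemma Bsp_graded: "Bsp G rho h = graded_space G rho h (\<lambda>M. ideal_gen (perp h (fixsp M)))"
  by (simp add: Bsp_def graded_space_def)

lemma hcomp_smash:
  assumes "k \<in> carrier G"
  shows "hcomp r (smash G rho alpha beta k) = (\<lambda>z. \<Sum>g\<in>carrier G. \<Sum>p\<in>{..r}.
      twedge (hcomp p (alpha g)) (mat_act (rho g) (rho (inv\<^bsub>G\<^esub> g))
        (hcomp (r - p) (beta (inv\<^bsub>G\<^esub> g \<otimes>\<^bsub>G\<^esub> k)))) z)"
  using assms by (simp add: smash_def hcomp_sum hcomp_twedge act_mat_act hcomp_mat_act)

text \<open>The smash product maps graded spaces to graded spaces, provided the coefficient rings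
  are compatible with the twisted multiplication: each summand of the k-component is a
  product as in the key lemma, with A = rho g and AB = rho k.\<close>
lemma smash_graded_space:
  fixes G :: "('g, 'b) monoid_scheme" and rho :: "'g \<Rightarrow> complex^'n^'n"
    and h :: "complex^'n \<Rightarrow> complex^'n \<Rightarrow> complex"
  assumes grp: "group G" and fin: "finite (carrier G)"
    and hom: "\<forall>g\<in>carrier G. \<forall>k\<in>carrier G. rho (g \<otimes>\<^bsub>G\<^esub> k) = rho g ** rho k"
    and one: "rho \<one>\<^bsub>G\<^esub> = mat 1"
    and H: "hermitian_inner h" and unitary: "\<forall>g\<in>carrier G. unitary_for h (rho g)"
    and R: "\<And>A B. twisted_mult_closed (R1 A) (R2 B) (R3 (A ** B)) h A B"
    and alpha: "alpha \<in> graded_space G rho h R1" and beta: "beta \<in> graded_space G rho h R2"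
  shows "smash G rho alpha beta \<in> graded_space G rho h R3"
proof -
  interpret G: group G by (rule grp)
  have component: "hcomp r (smash G rho alpha beta k) \<in> comp_space (R3 (rho k)) h (rho k) r"
    if k: "k \<in> carrier G" for k r
    unfolding hcomp_smash[OF k]
  proof (intro comp_space_sum fin finite_atMost)
    fix g p assume g: "g \<in> carrier G" and p: "p \<in> {..r}"
    have k': "inv\<^bsub>G\<^esub> g \<otimes>\<^bsub>G\<^esub> k \<in> carrier G" using g k by simp
    have "g \<otimes>\<^bsub>G\<^esub> (inv\<^bsub>G\<^esub> g \<otimes>\<^bsub>G\<^esub> k) = k" using g k by (simp add: G.m_assoc[symmetric])
    then have prod: "rho g ** rho (inv\<^bsub>G\<^esub> g \<otimes>\<^bsub>G\<^esub> k) = rho k" using hom g k' by metis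
    have inv: "rho (inv\<^bsub>G\<^esub> g) ** rho g = mat 1" using hom g one by (metis G.inv_closed G.l_inv)
    have "twedge (hcomp p (alpha g)) (mat_act (rho g) (rho (inv\<^bsub>G\<^esub> g))
        (hcomp (r - p) (beta (inv\<^bsub>G\<^esub> g \<otimes>\<^bsub>G\<^esub> k))))
      \<in> comp_space (R3 (rho g ** rho (inv\<^bsub>G\<^esub> g \<otimes>\<^bsub>G\<^esub> k))) h
          (rho g ** rho (inv\<^bsub>G\<^esub> g \<otimes>\<^bsub>G\<^esub> k)) (p + (r - p))"
      by (rule comp_space_product[OF H _ _ inv R])
        (use unitary alpha beta g k' in \<open>auto simp: graded_space_def\<close>)
    then show "twedge (hcomp p (alpha g)) (mat_act (rho g) (rho (inv\<^bsub>G\<^esub> g))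
        (hcomp (r - p) (beta (inv\<^bsub>G\<^esub> g \<otimes>\<^bsub>G\<^esub> k))))
      \<in> comp_space (R3 (rho k)) h (rho k) r"
      using p by (simp add: prod)
  qed
  show ?thesis using component by (simp add: graded_space_def smash_def)
qed

text \<open>B lies in Z because I(N_g) lies in S(V).\<close>
lemma Bsp_subset_Zsp: "Bsp G rho h \<subseteq> Zsp G rho h"
proof -
  have "comp_space (ideal_gen (perp h (fixsp M))) h M p \<subseteq> comp_space polyfun h M p" for M p
    by (rule comp_space_mono) (use ideal_sub_polyfun in blast)
  then show ?thesis unfolding Bsp_def Zsp_def by blast
qed

theorem proposition6p1:
  fixes G :: "('g, 'b) monoid_scheme"
    and rho :: "'g \<Rightarrow> complex^'n^'n"
    and h :: "complex^'n \<Rightarrow> complex^'n \<Rightarrow> complex"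
  assumes "group G" and "finite (carrier G)"
    and "\<forall>g\<in>carrier G. \<forall>k\<in>carrier G. rho (g \<otimes>\<^bsub>G\<^esub> k) = rho g ** rho k"
    and "rho \<one>\<^bsub>G\<^esub> = mat 1"
    and "hermitian_inner h"
    and "\<forall>g\<in>carrier G. \<forall>v w. h (rho g *v v) (rho g *v w) = h v w"
  shows "(\<forall>alpha\<in>Zsp G rho h. \<forall>beta\<in>Zsp G rho h. smash G rho alpha beta \<in> Zsp G rho h) \<and>
         Bsp G rho h \<subseteq> Zsp G rho h \<and>
         (\<forall>alpha\<in>Zsp G rho h. \<forall>beta\<in>Bsp G rho h.
             smash G rho alpha beta \<in> Bsp G rho h \<and> smash G rho beta alpha \<in> Bsp G rho h)"
proof -
  have unitary: "\<forall>g\<in>carrier G. unitary_for h (rho g)"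
    using assms(6) by (simp add: unitary_for_def)
  note smash_closed = smash_graded_space[OF assms(1-5) unitary]
  have "smash G rho alpha beta \<in> Zsp G rho h" if "alpha \<in> Zsp G rho h" "beta \<in> Zsp G rho h" for alpha beta
    using smash_closed[OF twisted_mult_closed_polyfun] that by (simp add: Zsp_graded)
  moreover have "smash G rho alpha beta \<in> Bsp G rho h" if "alpha \<in> Zsp G rho h" "beta \<in> Bsp G rho h"
    for alpha beta
    using smash_closed[OF twisted_mult_closed_ideal_right] that by (simp add: Zsp_graded Bsp_graded)
  moreover have "smash G rho beta alpha \<in> Bsp G rho h" if "alpha \<in> Zsp G rho h" "beta \<in> Bsp G rho h"
    for alpha beta
    using smash_closed[OF twisted_mult_closed_ideal_left] that by (simp add: Zsp_graded Bsp_graded)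
  ultimately show ?thesis using Bsp_subset_Zsp by blast
qed

end
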